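(* In the setting described in the context, suppose sequential ignorability, the overlap condition (with constant $\eta$) and correct specification hold. Then the regret of the estimated DTR $\hat\pi$ satisfies $$R(\hat{\pi}) \leq R_{1}^{\hat{\pi}_{1:T}}(\pi_{1}^{*,B}) + \sum_{t=2}^{T} \frac{2^{t-2}}{\eta^{t-1}} R_{t}^{\hat{\pi}_{t:T}}(\pi_{t}^{*,B}).$$
   Context: Fix $T\ge1$; $\mathcal{A}_t=\{0,\dots,d_t-1\}$; $\underline v_t=(v_1,\dots,v_t)$, $\underline v_{s:t}=(v_s,\dots,v_t)$, $\underline{\mathcal{A}}_t=\mathcal{A}_1\times\cdots\times\mathcal{A}_t$. Potential outcomes $Y_t(\underline a_t)$, potential states $S_t(\underline a_{t-1})$; observed $A_t$, $S_t=S_t(\underline A_{t-1})$, $Y_t=Y_t(\underline A_t)$; potential history $H_t(\underline a_{t-1})=(\underline a_{t-1},S_1,S_2(\underline a_1),\dots,S_t(\underline a_{t-1}))$, observed $H_t=H_t(\underline A_{t-1})$ with support $\mathcal{H}_t$. $e_t(h_t,a_t)=\mathbb{P}(A_t=a_t\mid H_t=h_t)$. Stage-$t$ policies are measurable $\pi_t:\mathcal{H}_t\to\mathcal{A}_t$; DTR $\pi=(\pi_1,\dots,\pi_T)$; class $\Pi=\Pi_1\times\cdots\times\Pi_T$, $\Pi_{s:t}=\Pi_s\times\cdots\times\Pi_t$. Welfare $W(\pi)=\mathbb{E}[\sum_{t}\sum_{\underline a_t}Y_t(\underline a_t)\prod_{s\le t}\mathbf{1}\{\pi_s(H_s(\underline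 a_{s-1}))=a_s\}]$, regret $R(\pi)=\max_{\tilde\pi\in\Pi}W(\tilde\pi)-W(\pi)$. Policy value: $V_t(\pi_{t:T})=\mathbb{E}[\sum_{s=t}^T\sum_{\underline a_s\in\underline{\mathcal{A}}_s}Y_s(\underline a_s)\mathbf{1}\{\underline A_{t-1}=\underline a_{t-1}\}\prod_{\ell=t}^s\mathbf{1}\{\pi_\ell(H_\ell(\underline a_{\ell-1}))=a_\ell\}]$ (indicator on $\underline A_0$ equal to 1). For $\pi_t\in\Pi_t$: $R_t^{\hat\pi_{t:T}}(\pi_t)=V_t(\pi_t,\hat\pi_{(t+1):T})-V_t(\hat\pi_{t:T})$. Q-functions: $Q_T(h_T,a_T)=\mathbb{E}[Y_T\mid H_T=h_T,A_T=a_T]$; for $t<T$, $Q_t^{\pi_{(t+1):T}}(h_t,a_t)=\mathbb{E}[Y_t+Q_{t+1}^{\pi_{(t+2):T}}(H_{t+1},\pi_{t+1}(H_{t+1}))\mid H_t=h_t,A_t=a_t]$ (with $Q_T^{\pi_{(T+1):T}}=Q_T$). Backward induction: $\pi_T^{*,B}\in\arg\max_{\Pi_T}\mathbb{E}[Q_T(H_T,\pi_T(H_T))]$, $\pi_t^{*,B}\in\arg\max_{\Pi_t}\mathbb{E}[Q_t^{\pi^{*,B}_{(t+1):T}}(H_t,\pi_t(H_t))]$. $\hat\pi=(\hat\pi_1,\dots,\hat\pi_T)\in\Pi$ is the DTR output by the doubly robust backward-induction algorithm (cross-fitted AIPW scores maximized stage by stage from $T$ down to $1$); the inequality concerns this element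 of $\Pi$. (Sequential ignorability) $\{Y_t(\underline a_t),\dots,Y_T(\underline a_T),S_{t+1}(\underline a_t),\dots,S_T(\underline a_{T-1})\}\perp A_t\mid H_t$ for all $t,\underline a_T$. (Overlap) $\eta\in(0,1)$ with $e_t(h_t,a_t)\ge\eta$ whenever $\pi_t(h_t)=a_t$ for some $\pi_t\in\Pi_t$. (Correct specification) There is $\pi^*_{2:T}\in\Pi_{2:T}$ with $Q_t^{\pi^*_{(t+1):T}}(H_t,\pi^*_t(H_t))\ge\sup_{\pi_t\in\Pi_t}Q_t^{\pi^*_{(t+1):T}}(H_t,\pi_t(H_t))$ a.s., $t=2,\dots,T$. *)

theory Defs
  imports "HOL-Probability.Probability"
begin

text \<open>Stages are indexed by t = 1..T. Actions are natural numbers,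
  the stage-t action set is the set of numbers below d t. An action sequence
  (a_1,...,a_t) is a list a of length t with a!(s-1) = a_s. Potential states:
  S t a with a of length t-1 (S 1 []), potential outcomes: Y t a with a of length t. A history is a pair (previous actions, states), the
  states being stored as an extensional function on {1..t}.\<close>

type_synonym 's hist = "nat list \<times> (nat \<Rightarrow> 's)"

definition act_seqs :: "(nat \<Rightarrow> nat) \<Rightarrow> nat \<Rightarrow> nat list set" where
  "act_seqs d t = {a. length a = t \<and> (\<forall>i<t. a ! i < d (Suc i))}"

definition obs_acts :: "(nat \<Rightarrow> 'w \<Rightarrow> nat) \<Rightarrow> nat \<Rightarrow> 'w \<Rightarrow> nat list" where
  "obs_acts A t \<omega> = map (\<lambda>s. A s \<omega>) [1..<Suc t]"

definition pot_hist :: "(nat \<Rightarrow> nat list \<Rightarrow> 'w \<Rightarrow> 's) \<Rightarrow> nat \<Rightarrow> nat list \<Rightarrow> 'w \<Rightarrow> 's hist" where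
  "pot_hist S t a \<omega> = (take (t - 1) a, restrict (\<lambda>s. S s (take (s - 1) a) \<omega>) {1..t})"

definition obs_hist :: "(nat \<Rightarrow> nat list \<Rightarrow> 'w \<Rightarrow> 's) \<Rightarrow> (nat \<Rightarrow> 'w \<Rightarrow> nat) \<Rightarrow> nat \<Rightarrow> 'w \<Rightarrow> 's hist" where
  "obs_hist S A t \<omega> = pot_hist S t (obs_acts A (t - 1) \<omega>) \<omega>"

definition hist_space :: "'s measure \<Rightarrow> nat \<Rightarrow> 's hist measure" where
  "hist_space SM t = count_space UNIV \<Otimes>\<^sub>M (\<Pi>\<^sub>M s\<in>{1..t}. SM)"

definition policy_class :: "nat \<Rightarrow> (nat \<Rightarrow> ('s hist \<Rightarrow> nat) set) \<Rightarrow> (nat \<Rightarrow> 's hist \<Rightarrow> nat) set" where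
  "policy_class T Pcl = {\<pi>. \<forall>t\<in>{1..T}. \<pi> t \<in> Pcl t}"

definition welfare ::
  "'w measure \<Rightarrow> nat \<Rightarrow> (nat \<Rightarrow> nat) \<Rightarrow> (nat \<Rightarrow> nat list \<Rightarrow> 'w \<Rightarrow> 's)
   \<Rightarrow> (nat \<Rightarrow> nat list \<Rightarrow> 'w \<Rightarrow> real) \<Rightarrow> (nat \<Rightarrow> 's hist \<Rightarrow> nat) \<Rightarrow> real" where
  "welfare M T d S Y \<pi> =
     (\<integral>\<omega>. (\<Sum>t\<in>{1..T}. \<Sum>a\<in>act_seqs d t.
        Y t a \<omega> * (\<Prod>s\<in>{1..t}. of_bool (\<pi> s (pot_hist S s (take (s - 1) a) \<omega>) = a ! (s - 1)))) \<partial>M)"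

definition regret ::
  "'w measure \<Rightarrow> nat \<Rightarrow> (nat \<Rightarrow> nat) \<Rightarrow> (nat \<Rightarrow> nat list \<Rightarrow> 'w \<Rightarrow> 's)
   \<Rightarrow> (nat \<Rightarrow> nat list \<Rightarrow> 'w \<Rightarrow> real) \<Rightarrow> (nat \<Rightarrow> ('s hist \<Rightarrow> nat) set)
   \<Rightarrow> (nat \<Rightarrow> 's hist \<Rightarrow> nat) \<Rightarrow> real" where
  "regret M T d S Y Pcl \<pi> =
     (SUP \<pi>'\<in>policy_class T Pcl. welfare M T d S Y \<pi>') - welfare M T d S Y \<pi>"

definition policy_value ::
  "'w measure \<Rightarrow> nat \<Rightarrow> (nat \<Rightarrow> nat) \<Rightarrow> (nat \<Rightarrow> nat list \<Rightarrow> 'w \<Rightarrow> 's) \<Rightarrow> (nat \<Rightarrow> 'w \<Rightarrow> nat)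
   \<Rightarrow> (nat \<Rightarrow> nat list \<Rightarrow> 'w \<Rightarrow> real) \<Rightarrow> nat \<Rightarrow> (nat \<Rightarrow> 's hist \<Rightarrow> nat) \<Rightarrow> real" where
  "policy_value M T d S A Y t \<pi> =
     (\<integral>\<omega>. (\<Sum>s\<in>{t..T}. \<Sum>a\<in>act_seqs d s.
        Y s a \<omega> * of_bool (obs_acts A (t - 1) \<omega> = take (t - 1) a) *
        (\<Prod>l\<in>{t..s}. of_bool (\<pi> l (pot_hist S l (take (l - 1) a) \<omega>) = a ! (l - 1)))) \<partial>M)"

definition stage_regret ::
  "'w measure \<Rightarrow> nat \<Rightarrow> (nat \<Rightarrow> nat) \<Rightarrow> (nat \<Rightarrow> nat list \<Rightarrow> 'w \<Rightarrow> 's) \<Rightarrow> (nat \<Rightarrow> 'w \<Rightarrow> nat)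
   \<Rightarrow> (nat \<Rightarrow> nat list \<Rightarrow> 'w \<Rightarrow> real) \<Rightarrow> nat \<Rightarrow> (nat \<Rightarrow> 's hist \<Rightarrow> nat) \<Rightarrow> ('s hist \<Rightarrow> nat) \<Rightarrow> real" where
  "stage_regret M T d S A Y t \<pi>h \<pi>t =
     policy_value M T d S A Y t (\<pi>h(t := \<pi>t)) - policy_value M T d S A Y t \<pi>h"

text \<open>q is a version of the conditional expectation E[target | H_t = h, A_t = a],
  viewed as a function of (h, a).\<close>
definition is_cond_reg ::
  "'w measure \<Rightarrow> 's measure \<Rightarrow> (nat \<Rightarrow> nat list \<Rightarrow> 'w \<Rightarrow> 's) \<Rightarrow> (nat \<Rightarrow> 'w \<Rightarrow> nat) \<Rightarrow> nat
   \<Rightarrow> ('w \<Rightarrow> real) \<Rightarrow> ('s hist \<Rightarrow> nat \<Rightarrow> real) \<Rightarrow> bool" where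
  "is_cond_reg M SM S A t target q \<longleftrightarrow>
     (\<lambda>(h, a). q h a) \<in> borel_measurable (hist_space SM t \<Otimes>\<^sub>M count_space UNIV) \<and>
     integrable M target \<and>
     integrable M (\<lambda>\<omega>. q (obs_hist S A t \<omega>) (A t \<omega>)) \<and>
     (\<forall>B\<in>sets (hist_space SM t). \<forall>a.
        (\<integral>\<omega>. indicator B (obs_hist S A t \<omega>) * of_bool (A t \<omega> = a) * target \<omega> \<partial>M) =
        (\<integral>\<omega>. indicator B (obs_hist S A t \<omega>) * of_bool (A t \<omega> = a) * q (obs_hist S A t \<omega>) a \<partial>M))"

text \<open>Qf pi t is a version of Q_t^{pi_{(t+1):T}} (for t = T: Q_T), for every DTR pi
  whose components 2..T lie in the class.\<close>
definition is_Q_family ::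
  "'w measure \<Rightarrow> nat \<Rightarrow> 's measure \<Rightarrow> (nat \<Rightarrow> nat list \<Rightarrow> 'w \<Rightarrow> 's) \<Rightarrow> (nat \<Rightarrow> 'w \<Rightarrow> nat)
   \<Rightarrow> (nat \<Rightarrow> nat list \<Rightarrow> 'w \<Rightarrow> real) \<Rightarrow> (nat \<Rightarrow> ('s hist \<Rightarrow> nat) set)
   \<Rightarrow> ((nat \<Rightarrow> 's hist \<Rightarrow> nat) \<Rightarrow> nat \<Rightarrow> 's hist \<Rightarrow> nat \<Rightarrow> real) \<Rightarrow> bool" where
  "is_Q_family M T SM S A Y Pcl Qf \<longleftrightarrow>
     (\<forall>\<pi>. (\<forall>t\<in>{2..T}. \<pi> t \<in> Pcl t) \<longrightarrow>
       (\<forall>t\<in>{1..T}. is_cond_reg M SM S A t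
          (\<lambda>\<omega>. Y t (obs_acts A t \<omega>) \<omega> +
                (if t < T then Qf \<pi> (Suc t) (obs_hist S A (Suc t) \<omega>) (\<pi> (Suc t) (obs_hist S A (Suc t) \<omega>))
                 else 0))
          (Qf \<pi> t)))"

text \<open>e t is a version of the propensity score e_t(h, a) = P(A_t = a | H_t = h).\<close>
definition is_propensity ::
  "'w measure \<Rightarrow> 's measure \<Rightarrow> (nat \<Rightarrow> nat list \<Rightarrow> 'w \<Rightarrow> 's) \<Rightarrow> (nat \<Rightarrow> 'w \<Rightarrow> nat) \<Rightarrow> nat
   \<Rightarrow> ('s hist \<Rightarrow> nat \<Rightarrow> real) \<Rightarrow> bool" where
  "is_propensity M SM S A t e \<longleftrightarrow>
     (\<lambda>(h, a). e h a) \<in> borel_measurable (hist_space SM t \<Otimes>\<^sub>M count_space UNIV) \<and>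
     (\<forall>B\<in>sets (hist_space SM t). \<forall>a.
        (\<integral>\<omega>. indicator B (obs_hist S A t \<omega>) * of_bool (A t \<omega> = a) \<partial>M) =
        (\<integral>\<omega>. indicator B (obs_hist S A t \<omega>) * e (obs_hist S A t \<omega>) a \<partial>M))"

definition cond_indep ::
  "'w measure \<Rightarrow> ('w \<Rightarrow> 'x) \<Rightarrow> 'x measure \<Rightarrow> ('w \<Rightarrow> 'z) \<Rightarrow> 'z measure
   \<Rightarrow> ('w \<Rightarrow> 'h) \<Rightarrow> 'h measure \<Rightarrow> bool" where
  "cond_indep M X MX Z MZ H MH \<longleftrightarrow>
     (\<forall>C\<in>sets MX. \<forall>D\<in>sets MZ. AE \<omega> in M.
        real_cond_exp M (vimage_algebra (space M) H MH)
          (\<lambda>\<omega>. indicator C (X \<omega>) * indicator D (Z \<omega>)) \<omega> =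
        real_cond_exp M (vimage_algebra (space M) H MH) (\<lambda>\<omega>. indicator C (X \<omega>)) \<omega> *
        real_cond_exp M (vimage_algebra (space M) H MH) (\<lambda>\<omega>. indicator D (Z \<omega>)) \<omega>)"

definition seq_ignorability ::
  "'w measure \<Rightarrow> nat \<Rightarrow> (nat \<Rightarrow> nat) \<Rightarrow> 's measure \<Rightarrow> (nat \<Rightarrow> nat list \<Rightarrow> 'w \<Rightarrow> 's)
   \<Rightarrow> (nat \<Rightarrow> 'w \<Rightarrow> nat) \<Rightarrow> (nat \<Rightarrow> nat list \<Rightarrow> 'w \<Rightarrow> real) \<Rightarrow> bool" where
  "seq_ignorability M T d SM S A Y \<longleftrightarrow>
     (\<forall>t\<in>{1..T}. \<forall>a\<in>act_seqs d T.
        cond_indep M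
          (\<lambda>\<omega>. (restrict (\<lambda>s. Y s (take s a) \<omega>) {t..T},
                 restrict (\<lambda>s. S s (take (s - 1) a) \<omega>) {Suc t..T}))
          ((\<Pi>\<^sub>M s\<in>{t..T}. (borel :: real measure)) \<Otimes>\<^sub>M (\<Pi>\<^sub>M s\<in>{Suc t..T}. SM))
          (A t) (count_space UNIV)
          (obs_hist S A t) (hist_space SM t))"

end

theory Submission
  imports Defs
begin

(* Under sequential ignorability and overlap, the policy value V_t(pi) equals
   E[Q_t^pi(H_t, pi_t(H_t))], and inverse propensity weighting turns a weighted expectation of
   the difference of the stage-t Q-values of two policies that agree at stage t into a weighted
   expectation of the stage-(t+1) difference, the weight growing by at most the factor 1/eta.
   Correct specification makes the backward-induction Q-values pointwise optimal from stage 2 on.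
   Let G_t be the largest weighted gap between pi^B and a policy that agrees with hat pi from
   stage t on. Switching the stage-t component of such a policy to pi^B_t splits its gap into an
   IPW term, at most G_(t+1)/eta, and a term that optimality bounds by R_t + G_(t+1)/eta. Hence
   G_t <= R_t + (2/eta) G_(t+1). Finally pi^B maximizes the welfare over the class, so the regret
   is at most W(pi^B) - W(hat pi) <= R_1 + G_2/eta, and unrolling the recursion gives the
   weights 2^(t-2)/eta^(t-1). *)

lemma sum_lessThan_of_bool_eq:
  fixes f :: "nat \<Rightarrow> 'a::semiring_1"
  assumes "x < n"
  shows "(\<Sum>b<n. of_bool (x = b) * f b) = f x"
proof -
  have "(\<Sum>b<n. of_bool (x = b) * f b) = (\<Sum>b\<in>{..<n}. if b = x then f b else 0)"
    by (intro sum.cong) auto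
  also have "\<dots> = f x" using assms by (subst sum.delta) auto
  finally show ?thesis .
qed

lemma integrable_indicator_comp_mult:
  fixes f :: "'a \<Rightarrow> real"
  assumes X[measurable]: "X \<in> measurable M MX" and B[measurable]: "B \<in> sets MX"
    and f: "integrable M f"
  shows "integrable M (\<lambda>\<omega>. indicator B (X \<omega>) * f \<omega>)"
proof (rule Bochner_Integration.integrable_bound[OF f])
  have [measurable]: "f \<in> borel_measurable M" using f by (rule borel_measurable_integrable)
  show "(\<lambda>\<omega>. indicator B (X \<omega>) * f \<omega>) \<in> borel_measurable M" by measurable
  show "AE x in M. norm (indicator B (X x) * f x) \<le> norm (f x)"
    by (auto simp: indicator_def)
qed

lemma integrable_bounded_mult:
  fixes f g :: "'a \<Rightarrow> real"
  assumes g: "integrable M g" and f: "f \<in> borel_measurable M"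
    and bound: "\<And>\<omega>. \<omega> \<in> space M \<Longrightarrow> \<bar>f \<omega>\<bar> \<le> c"
  shows "integrable M (\<lambda>\<omega>. f \<omega> * g \<omega>)"
proof (rule Bochner_Integration.integrable_bound[OF integrable_mult_right[OF g, of c]])
  have [measurable]: "g \<in> borel_measurable M" using g by (rule borel_measurable_integrable)
  show "(\<lambda>\<omega>. f \<omega> * g \<omega>) \<in> borel_measurable M" using f by measurable
  show "AE \<omega> in M. norm (f \<omega> * g \<omega>) \<le> norm (c * g \<omega>)"
  proof (rule AE_I2)
    fix \<omega> assume \<omega>: "\<omega> \<in> space M"
    have "\<bar>f \<omega>\<bar> * \<bar>g \<omega>\<bar> \<le> c * \<bar>g \<omega>\<bar>" using bound[OF \<omega>] by (rule mult_right_mono) simp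
    moreover have "0 \<le> c" using bound[OF \<omega>] by linarith
    ultimately show "norm (f \<omega> * g \<omega>) \<le> norm (c * g \<omega>)" by (simp add: abs_mult)
  qed
qed

lemma emeasure_distr_density_real:
  fixes f :: "'a \<Rightarrow> real"
  assumes X[measurable]: "X \<in> measurable M MX" and B[measurable]: "B \<in> sets MX"
    and f[measurable]: "f \<in> borel_measurable M" and nonneg: "\<And>\<omega>. \<omega> \<in> space M \<Longrightarrow> 0 \<le> f \<omega>"
    and int: "integrable M f"
  shows "emeasure (distr (density M f) MX X) B = ennreal (\<integral>\<omega>. indicator B (X \<omega>) * f \<omega> \<partial>M)"
proof -
  have "emeasure (distr (density M f) MX X) B = emeasure (density M f) (X -` B \<inter> space M)"
    by (subst emeasure_distr) auto
  also have "\<dots> = (\<integral>\<^sup>+ \<omega>. ennreal (f \<omega>) * indicator (X -` B \<inter> space M) \<omega> \<partial>M)"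
    by (subst emeasure_density) auto
  also have "\<dots> = (\<integral>\<^sup>+ \<omega>. ennreal (indicator B (X \<omega>) * f \<omega>) \<partial>M)"
    by (intro nn_integral_cong) (auto simp: indicator_def)
  also have "\<dots> = ennreal (\<integral>\<omega>. indicator B (X \<omega>) * f \<omega> \<partial>M)"
    by (intro nn_integral_eq_integral integrable_indicator_comp_mult[OF X B int]) (auto simp: nonneg)
  finally show ?thesis .
qed

lemma distr_density_eq_of_generator:
  fixes f g :: "'a \<Rightarrow> real"
  assumes X[measurable]: "X \<in> measurable M MX"
    and [measurable]: "f \<in> borel_measurable M" "g \<in> borel_measurable M"
    and f_nonneg: "\<And>\<omega>. \<omega> \<in> space M \<Longrightarrow> 0 \<le> f \<omega>" and g_nonneg: "\<And>\<omega>. \<omega> \<in> space M \<Longrightarrow> 0 \<le> g \<omega>"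
    and f_int: "integrable M f" and g_int: "integrable M g"
    and gen: "sets MX = sigma_sets (space MX) E" "E \<subseteq> Pow (space MX)" "Int_stable E" "space MX \<in> E"
    and eq: "\<And>B. B \<in> E \<Longrightarrow> (\<integral>\<omega>. indicator B (X \<omega>) * f \<omega> \<partial>M) = (\<integral>\<omega>. indicator B (X \<omega>) * g \<omega> \<partial>M)"
  shows "distr (density M f) MX X = distr (density M g) MX X"
proof (rule measure_eqI_generator_eq[where E=E and \<Omega>="space MX" and A="\<lambda>_. space MX"])
  have E_sets: "B \<in> sets MX" if "B \<in> E" for B
    using that gen(1) by (auto intro: sigma_sets.Basic)
  show "emeasure (distr (density M f) MX X) B = emeasure (distr (density M g) MX X) B" if "B \<in> E" for B
    using E_sets[OF that] eq[OF that]
    by (simp add: emeasure_distr_density_real[OF X _ _ f_nonneg f_int]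
        emeasure_distr_density_real[OF X _ _ g_nonneg g_int])
  show "emeasure (distr (density M f) MX X) (space MX) \<noteq> \<infinity>" for i :: nat
    by (simp add: emeasure_distr_density_real[OF X _ _ f_nonneg f_int])
qed (use gen in auto)

lemma integral_comp_mult_eq_of_distr_density_eq:
  fixes f g :: "'a \<Rightarrow> real" and F :: "'x \<Rightarrow> real"
  assumes X[measurable]: "X \<in> measurable M MX"
    and [measurable]: "f \<in> borel_measurable M" "g \<in> borel_measurable M"
    and f_nonneg: "\<And>\<omega>. \<omega> \<in> space M \<Longrightarrow> 0 \<le> f \<omega>" and g_nonneg: "\<And>\<omega>. \<omega> \<in> space M \<Longrightarrow> 0 \<le> g \<omega>"
    and eq: "distr (density M f) MX X = distr (density M g) MX X"
    and F[measurable]: "F \<in> borel_measurable MX"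
  shows "integrable M (\<lambda>\<omega>. F (X \<omega>) * f \<omega>) \<longleftrightarrow> integrable M (\<lambda>\<omega>. F (X \<omega>) * g \<omega>)"
    and "(\<integral>\<omega>. F (X \<omega>) * f \<omega> \<partial>M) = (\<integral>\<omega>. F (X \<omega>) * g \<omega> \<partial>M)"
proof -
  have X': "X \<in> measurable (density M h) MX" for h :: "'a \<Rightarrow> ennreal"
    by simp
  have integrable_eq: "integrable M (\<lambda>\<omega>. F (X \<omega>) * h \<omega>) \<longleftrightarrow> integrable (distr (density M h) MX X) F"
    if [measurable]: "h \<in> borel_measurable M" and nonneg: "\<And>\<omega>. \<omega> \<in> space M \<Longrightarrow> 0 \<le> h \<omega>" for h
    by (subst integrable_distr_eq[OF X' F], subst integrable_density)
       (auto simp: nonneg mult.commute)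
  have integral_eq: "(\<integral>\<omega>. F (X \<omega>) * h \<omega> \<partial>M) = integral\<^sup>L (distr (density M h) MX X) F"
    if [measurable]: "h \<in> borel_measurable M" and nonneg: "\<And>\<omega>. \<omega> \<in> space M \<Longrightarrow> 0 \<le> h \<omega>" for h
    by (subst integral_distr[OF X' F], subst integral_density)
       (auto simp: nonneg mult.commute)
  show "integrable M (\<lambda>\<omega>. F (X \<omega>) * f \<omega>) \<longleftrightarrow> integrable M (\<lambda>\<omega>. F (X \<omega>) * g \<omega>)"
    using eq by (simp add: integrable_eq f_nonneg g_nonneg)
  show "(\<integral>\<omega>. F (X \<omega>) * f \<omega> \<partial>M) = (\<integral>\<omega>. F (X \<omega>) * g \<omega> \<partial>M)"
    using eq by (simp add: integral_eq f_nonneg g_nonneg)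
qed

lemma integral_comp_mult_eq_of_generator:
  fixes f g :: "'a \<Rightarrow> real" and F :: "'x \<Rightarrow> real"
  assumes X[measurable]: "X \<in> measurable M MX"
    and f: "integrable M f" "AE \<omega> in M. 0 \<le> f \<omega>" and g: "integrable M g" "AE \<omega> in M. 0 \<le> g \<omega>"
    and gen: "sets MX = sigma_sets (space MX) E" "E \<subseteq> Pow (space MX)" "Int_stable E" "space MX \<in> E"
    and eq: "\<And>B. B \<in> E \<Longrightarrow> (\<integral>\<omega>. indicator B (X \<omega>) * f \<omega> \<partial>M) = (\<integral>\<omega>. indicator B (X \<omega>) * g \<omega> \<partial>M)"
    and F[measurable]: "F \<in> borel_measurable MX"
  shows "integrable M (\<lambda>\<omega>. F (X \<omega>) * f \<omega>) \<longleftrightarrow> integrable M (\<lambda>\<omega>. F (X \<omega>) * g \<omega>)"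
    and "(\<integral>\<omega>. F (X \<omega>) * f \<omega> \<partial>M) = (\<integral>\<omega>. F (X \<omega>) * g \<omega> \<partial>M)"
proof -
  have [measurable]: "f \<in> borel_measurable M" "g \<in> borel_measurable M"
    using f(1) g(1) by (auto intro: borel_measurable_integrable)
  define f' where "f' \<omega> = max 0 (f \<omega>)" for \<omega>
  define g' where "g' \<omega> = max 0 (g \<omega>)" for \<omega>
  have [measurable]: "f' \<in> borel_measurable M" "g' \<in> borel_measurable M"
    unfolding f'_def g'_def by measurable
  have f'_ae: "AE \<omega> in M. f' \<omega> = f \<omega>"
    using f(2) by eventually_elim (simp add: f'_def)
  have g'_ae: "AE \<omega> in M. g' \<omega> = g \<omega>"
    using g(2) by eventually_elim (simp add: g'_def)
  have cong_f: "integrable M (\<lambda>\<omega>. G (X \<omega>) * f' \<omega>) \<longleftrightarrow> integrable M (\<lambda>\<omega>. G (X \<omega>) * f \<omega>)"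
      "(\<integral>\<omega>. G (X \<omega>) * f' \<omega> \<partial>M) = (\<integral>\<omega>. G (X \<omega>) * f \<omega> \<partial>M)"
    if [measurable]: "G \<in> borel_measurable MX" for G :: "'x \<Rightarrow> real"
    by (rule integrable_cong_AE integral_cong_AE, measurable, use f'_ae in \<open>auto elim: eventually_mono\<close>)+
  have cong_g: "integrable M (\<lambda>\<omega>. G (X \<omega>) * g' \<omega>) \<longleftrightarrow> integrable M (\<lambda>\<omega>. G (X \<omega>) * g \<omega>)"
      "(\<integral>\<omega>. G (X \<omega>) * g' \<omega> \<partial>M) = (\<integral>\<omega>. G (X \<omega>) * g \<omega> \<partial>M)"
    if [measurable]: "G \<in> borel_measurable MX" for G :: "'x \<Rightarrow> real"
    by (rule integrable_cong_AE integral_cong_AE, measurable, use g'_ae in \<open>auto elim: eventually_mono\<close>)+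
  have integrable': "integrable M f'" "integrable M g'"
    unfolding f'_def g'_def using f(1) g(1) by (auto intro!: integrable_max)
  have eq': "distr (density M f') MX X = distr (density M g') MX X"
  proof (rule distr_density_eq_of_generator[OF X _ _ _ _ integrable' gen])
    fix B assume B: "B \<in> E"
    then have [measurable]: "B \<in> sets MX" using gen(1) by (auto intro: sigma_sets.Basic)
    show "(\<integral>\<omega>. indicator B (X \<omega>) * f' \<omega> \<partial>M) = (\<integral>\<omega>. indicator B (X \<omega>) * g' \<omega> \<partial>M)"
      using eq[OF B] cong_f(2)[of "indicator B"] cong_g(2)[of "indicator B"] by simp
  qed (auto simp: f'_def g'_def)
  have "integrable M (\<lambda>\<omega>. F (X \<omega>) * f' \<omega>) \<longleftrightarrow> integrable M (\<lambda>\<omega>. F (X \<omega>) * g' \<omega>)"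
    and "(\<integral>\<omega>. F (X \<omega>) * f' \<omega> \<partial>M) = (\<integral>\<omega>. F (X \<omega>) * g' \<omega> \<partial>M)"
    by (rule integral_comp_mult_eq_of_distr_density_eq[OF X _ _ _ _ eq' F]; simp add: f'_def g'_def)+
  then show "integrable M (\<lambda>\<omega>. F (X \<omega>) * f \<omega>) \<longleftrightarrow> integrable M (\<lambda>\<omega>. F (X \<omega>) * g \<omega>)"
    and "(\<integral>\<omega>. F (X \<omega>) * f \<omega> \<partial>M) = (\<integral>\<omega>. F (X \<omega>) * g \<omega> \<partial>M)"
    using cong_f[OF F] cong_g[OF F] by simp_all
qed

lemma integral_comp_mult_eq_of_indicator_eq:
  fixes f g :: "'a \<Rightarrow> real" and F :: "'x \<Rightarrow> real"
  assumes X: "X \<in> measurable M MX"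
    and f: "integrable M f" "AE \<omega> in M. 0 \<le> f \<omega>" and g: "integrable M g" "AE \<omega> in M. 0 \<le> g \<omega>"
    and eq: "\<And>B. B \<in> sets MX \<Longrightarrow> (\<integral>\<omega>. indicator B (X \<omega>) * f \<omega> \<partial>M) = (\<integral>\<omega>. indicator B (X \<omega>) * g \<omega> \<partial>M)"
    and F: "F \<in> borel_measurable MX"
  shows "integrable M (\<lambda>\<omega>. F (X \<omega>) * f \<omega>) \<longleftrightarrow> integrable M (\<lambda>\<omega>. F (X \<omega>) * g \<omega>)"
    and "(\<integral>\<omega>. F (X \<omega>) * f \<omega> \<partial>M) = (\<integral>\<omega>. F (X \<omega>) * g \<omega> \<partial>M)"
  by (rule integral_comp_mult_eq_of_generator[OF X f g _ _ _ _ eq F];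
      auto simp: sets.sigma_sets_eq Int_stable_def dest: sets.sets_into_space)+

lemma integral_comp_mult_eq_0:
  fixes g :: "'a \<Rightarrow> real" and F :: "'x \<Rightarrow> real"
  assumes X[measurable]: "X \<in> measurable M MX" and g: "integrable M g"
    and zero: "\<And>B. B \<in> sets MX \<Longrightarrow> (\<integral>\<omega>. indicator B (X \<omega>) * g \<omega> \<partial>M) = 0"
    and F[measurable]: "F \<in> borel_measurable MX"
    and Fg: "integrable M (\<lambda>\<omega>. F (X \<omega>) * g \<omega>)"
  shows "(\<integral>\<omega>. F (X \<omega>) * g \<omega> \<partial>M) = 0"
proof -
  have [measurable]: "g \<in> borel_measurable M" using g by (rule borel_measurable_integrable)
  define gp where "gp \<omega> = max 0 (g \<omega>)" for \<omega>
  define gm where "gm \<omega> = max 0 (- g \<omega>)" for \<omega>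
  have g_split: "g \<omega> = gp \<omega> - gm \<omega>" for \<omega> by (simp add: gp_def gm_def max_def)
  have gp_gm: "integrable M gp" "AE \<omega> in M. 0 \<le> gp \<omega>" "integrable M gm" "AE \<omega> in M. 0 \<le> gm \<omega>"
    unfolding gp_def gm_def using g by (auto intro!: integrable_max)
  have comp_int: "integrable M (\<lambda>\<omega>. H (X \<omega>) * gp \<omega>)" "integrable M (\<lambda>\<omega>. H (X \<omega>) * gm \<omega>)"
    if Hg: "integrable M (\<lambda>\<omega>. H (X \<omega>) * g \<omega>)" and [measurable]: "H \<in> borel_measurable MX"
    for H :: "'x \<Rightarrow> real"
    by (rule Bochner_Integration.integrable_bound[OF Hg];
        auto simp: gp_def gm_def abs_mult intro!: mult_left_mono)+
  have split_integral: "(\<integral>\<omega>. H (X \<omega>) * g \<omega> \<partial>M) = (\<integral>\<omega>. H (X \<omega>) * gp \<omega> \<partial>M) - (\<integral>\<omega>. H (X \<omega>) * gm \<omega> \<partial>M)"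
    if "integrable M (\<lambda>\<omega>. H (X \<omega>) * g \<omega>)" "H \<in> borel_measurable MX" for H :: "'x \<Rightarrow> real"
    using comp_int[OF that] by (simp add: g_split right_diff_distrib)
  have "(\<integral>\<omega>. F (X \<omega>) * gp \<omega> \<partial>M) = (\<integral>\<omega>. F (X \<omega>) * gm \<omega> \<partial>M)"
  proof (rule integral_comp_mult_eq_of_indicator_eq(2)[OF X gp_gm _ F])
    fix B assume [measurable]: "B \<in> sets MX"
    have "integrable M (\<lambda>\<omega>. indicator B (X \<omega>) * g \<omega>)"
      by (rule integrable_indicator_comp_mult[OF X _ g]) simp
    then show "(\<integral>\<omega>. indicator B (X \<omega>) * gp \<omega> \<partial>M) = (\<integral>\<omega>. indicator B (X \<omega>) * gm \<omega> \<partial>M)"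
      using split_integral[of "indicator B"] zero[of B] by simp
  qed
  then show ?thesis using split_integral[OF Fg F] by simp
qed

lemma AE_comp_nonneg_of_indicator_integrals:
  fixes f :: "'x \<Rightarrow> real" and g :: "'a \<Rightarrow> real"
  assumes "finite_measure M"
    and X[measurable]: "X \<in> measurable M MX" and f[measurable]: "f \<in> borel_measurable MX"
    and g: "integrable M g" and g_nonneg: "AE \<omega> in M. 0 \<le> g \<omega>"
    and eq: "\<And>B. B \<in> sets MX \<Longrightarrow> (\<integral>\<omega>. indicator B (X \<omega>) * f (X \<omega>) \<partial>M) = (\<integral>\<omega>. indicator B (X \<omega>) * g \<omega> \<partial>M)"
  shows "AE \<omega> in M. 0 \<le> f (X \<omega>)"
proof -
  interpret finite_measure M by fact
  have "AE \<omega> in M. \<not> (- real n < f (X \<omega>) \<and> f (X \<omega>) < 0)" for n :: nat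
  proof -
    define B where "B = {x \<in> space MX. - real n < f x \<and> f x < 0}"
    have B[measurable]: "B \<in> sets MX" unfolding B_def by measurable
    have "0 \<le> (\<integral>\<omega>. indicator B (X \<omega>) * g \<omega> \<partial>M)"
      by (rule integral_nonneg_AE) (use g_nonneg in \<open>auto simp: indicator_def\<close>)
    then have "(\<integral>\<omega>. - (indicator B (X \<omega>) * f (X \<omega>)) \<partial>M) \<le> 0"
      using eq[OF B] by simp
    moreover have "integrable M (\<lambda>\<omega>. - (indicator B (X \<omega>) * f (X \<omega>)))"
      by (rule integrable_const_bound[where B="real n"]) (auto simp: B_def indicator_def)
    ultimately have "AE \<omega> in M. - (indicator B (X \<omega>) * f (X \<omega>)) = 0"
      using integral_nonneg_AE[of "\<lambda>\<omega>. - (indicator B (X \<omega>) * f (X \<omega>))" M]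
      by (subst integral_nonneg_eq_0_iff_AE[symmetric]) (auto simp: B_def indicator_def)
    then show ?thesis using AE_space
      by eventually_elim (auto simp: B_def indicator_def measurable_space[OF X] split: if_splits)
  qed
  then have "AE \<omega> in M. \<forall>n::nat. \<not> (- real n < f (X \<omega>) \<and> f (X \<omega>) < 0)"
    unfolding AE_all_countable by blast
  then show ?thesis
  proof eventually_elim
    case (elim \<omega>)
    obtain n :: nat where "\<bar>f (X \<omega>)\<bar> < real n" using reals_Archimedean2 by blast
    then show ?case using elim[rule_format, of n] by auto
  qed
qed

lemma AE_comp_le_1_of_indicator_integrals:
  fixes f :: "'x \<Rightarrow> real" and g :: "'a \<Rightarrow> real"
  assumes "finite_measure M"
    and X[measurable]: "X \<in> measurable M MX" and f[measurable]: "f \<in> borel_measurable MX"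
    and g: "integrable M g" and g_le: "AE \<omega> in M. g \<omega> \<le> 1"
    and eq: "\<And>B. B \<in> sets MX \<Longrightarrow> (\<integral>\<omega>. indicator B (X \<omega>) * f (X \<omega>) \<partial>M) = (\<integral>\<omega>. indicator B (X \<omega>) * g \<omega> \<partial>M)"
  shows "AE \<omega> in M. f (X \<omega>) \<le> 1"
proof -
  interpret finite_measure M by fact
  have "AE \<omega> in M. \<not> (1 < f (X \<omega>) \<and> f (X \<omega>) < real n)" for n :: nat
  proof -
    define B where "B = {x \<in> space MX. 1 < f x \<and> f x < real n}"
    have B[measurable]: "B \<in> sets MX" unfolding B_def by measurable
    let ?D = "\<lambda>\<omega>. indicator B (X \<omega>) * f (X \<omega>) - indicator B (X \<omega>) * g \<omega>"
    have int_f: "integrable M (\<lambda>\<omega>. indicator B (X \<omega>) * f (X \<omega>))"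
      by (rule integrable_const_bound[where B="real n"]) (auto simp: B_def indicator_def)
    have int_g: "integrable M (\<lambda>\<omega>. indicator B (X \<omega>) * g \<omega>)"
      by (rule integrable_indicator_comp_mult[OF X B g])
    have int: "integrable M ?D" using int_f int_g by simp
    have D_nonneg: "AE \<omega> in M. 0 \<le> ?D \<omega>"
      using g_le by eventually_elim (auto simp: B_def indicator_def)
    have "(\<integral>\<omega>. ?D \<omega> \<partial>M) = 0"
      using eq[OF B] int_f int_g by simp
    then have "AE \<omega> in M. ?D \<omega> = 0"
      using int D_nonneg by (subst (asm) integral_nonneg_eq_0_iff_AE) auto
    then show ?thesis using g_le AE_space
      by eventually_elim (auto simp: B_def indicator_def measurable_space[OF X] split: if_splits)
  qed
  then have "AE \<omega> in M. \<forall>n::nat. \<not> (1 < f (X \<omega>) \<and> f (X \<omega>) < real n)"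
    unfolding AE_all_countable by blast
  then show ?thesis
  proof eventually_elim
    case (elim \<omega>)
    obtain n :: nat where "\<bar>f (X \<omega>)\<bar> < real n" using reals_Archimedean2 by blast
    then show ?case using elim[rule_format, of n] by auto
  qed
qed

section \<open>Histories\<close>

definition hist_trunc :: "nat \<Rightarrow> 's hist \<Rightarrow> 's hist" where
  "hist_trunc t h = (take (t - 1) (fst h), restrict (snd h) {1..t})"

lemma hist_trunc_measurable: "hist_trunc t \<in> measurable (hist_space SM (Suc t)) (hist_space SM t)"
  unfolding hist_trunc_def hist_space_def
proof (intro measurable_Pair measurable_restrict)
  show "(\<lambda>x. take (t - 1) (fst x)) \<in> (count_space UNIV \<Otimes>\<^sub>M Pi\<^sub>M {1..Suc t} (\<lambda>s. SM)) \<rightarrow>\<^sub>M count_space UNIV"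
    by (rule measurable_compose[OF measurable_fst]) simp
  fix i assume "i \<in> {1..t}"
  then show "(\<lambda>x. snd x i) \<in> (count_space UNIV \<Otimes>\<^sub>M Pi\<^sub>M {1..Suc t} (\<lambda>s. SM)) \<rightarrow>\<^sub>M SM"
    by (intro measurable_compose[OF measurable_snd] measurable_component_singleton) auto
qed

lemma hist_action_measurable: "(\<lambda>h::'s hist. fst h ! i) \<in> measurable (hist_space SM t) (count_space UNIV)"
  unfolding hist_space_def by (rule measurable_compose[OF measurable_fst]) simp

locale dtr_model =
  fixes M :: "'w measure" and SM :: "'s measure"
    and T :: nat and d :: "nat \<Rightarrow> nat"
    and S :: "nat \<Rightarrow> nat list \<Rightarrow> 'w \<Rightarrow> 's"
    and Y :: "nat \<Rightarrow> nat list \<Rightarrow> 'w \<Rightarrow> real"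
    and A :: "nat \<Rightarrow> 'w \<Rightarrow> nat"
    and Pcl :: "nat \<Rightarrow> ('s hist \<Rightarrow> nat) set"
    and e :: "nat \<Rightarrow> 's hist \<Rightarrow> nat \<Rightarrow> real"
    and Qf :: "(nat \<Rightarrow> 's hist \<Rightarrow> nat) \<Rightarrow> nat \<Rightarrow> 's hist \<Rightarrow> nat \<Rightarrow> real"
    and \<eta> :: real
  assumes prob: "prob_space M"
    and T_pos: "1 \<le> T"
    and A_meas: "\<And>t. t \<in> {1..T} \<Longrightarrow> A t \<in> measurable M (count_space UNIV)"
    and A_range: "\<And>t \<omega>. t \<in> {1..T} \<Longrightarrow> \<omega> \<in> space M \<Longrightarrow> A t \<omega> < d t"
    and S_meas: "\<And>t a. t \<in> {1..T} \<Longrightarrow> a \<in> act_seqs d (t - 1) \<Longrightarrow> S t a \<in> measurable M SM"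
    and Y_int: "\<And>t a. t \<in> {1..T} \<Longrightarrow> a \<in> act_seqs d t \<Longrightarrow> integrable M (Y t a)"
    and Pi_meas: "\<And>t. t \<in> {1..T} \<Longrightarrow> Pcl t \<subseteq> measurable (hist_space SM t) (count_space UNIV)"
    and Pi_range: "\<And>t \<pi> h. t \<in> {1..T} \<Longrightarrow> \<pi> \<in> Pcl t \<Longrightarrow> \<pi> h < d t"
    and propensity: "\<And>t. t \<in> {1..T} \<Longrightarrow> is_propensity M SM S A t (e t)"
    and Q: "is_Q_family M T SM S A Y Pcl Qf"
    and ignorability: "seq_ignorability M T d SM S A Y"
    and eta: "0 < \<eta>" "\<eta> < 1"
    and overlap: "\<And>t. t \<in> {1..T} \<Longrightarrow>
       AE \<omega> in M. \<forall>a. (\<exists>\<pi>\<in>Pcl t. \<pi> (obs_hist S A t \<omega>) = a) \<longrightarrow> \<eta> \<le> e t (obs_hist S A t \<omega>) a"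
begin

sublocale prob_space M by (rule prob)

abbreviation H :: "nat \<Rightarrow> 'w \<Rightarrow> 's hist" where
  "H t \<equiv> obs_hist S A t"

lemma d_pos: "t \<in> {1..T} \<Longrightarrow> 0 < d t"
  using A_range not_empty by fastforce

lemma obs_acts_Suc: "obs_acts A (Suc t) \<omega> = obs_acts A t \<omega> @ [A (Suc t) \<omega>]"
  by (simp add: obs_acts_def)

lemma length_obs_acts[simp]: "length (obs_acts A t \<omega>) = t"
  by (simp add: obs_acts_def)

lemma nth_obs_acts: "i < t \<Longrightarrow> obs_acts A t \<omega> ! i = A (Suc i) \<omega>"
  by (simp add: obs_acts_def nth_append del: upt_Suc)

lemma take_obs_acts: "k \<le> t \<Longrightarrow> take k (obs_acts A t \<omega>) = obs_acts A k \<omega>"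
  by (simp add: obs_acts_def take_map del: upt_Suc)

lemma obs_acts_in_act_seqs: "t \<le> T \<Longrightarrow> \<omega> \<in> space M \<Longrightarrow> obs_acts A t \<omega> \<in> act_seqs d t"
  by (auto simp: act_seqs_def nth_obs_acts intro!: A_range)

lemma take_in_act_seqs: "a \<in> act_seqs d t \<Longrightarrow> k \<le> t \<Longrightarrow> take k a \<in> act_seqs d k"
  by (auto simp: act_seqs_def)

lemma extend_act_seq:
  assumes a: "a \<in> act_seqs d s" and s: "s \<le> T"
  shows "\<exists>a'\<in>act_seqs d T. take s a' = a"
proof
  have len: "length a = s" using a by (simp add: act_seqs_def)
  show "take s (a @ replicate (T - s) 0) = a" using len by simp
  show "a @ replicate (T - s) 0 \<in> act_seqs d T"
    using a len s d_pos by (auto simp: act_seqs_def nth_append)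
qed

lemma finite_act_seqs: "finite (act_seqs d s)"
proof (rule finite_subset)
  let ?n = "\<Sum>j\<in>{1..s}. d j"
  show "act_seqs d s \<subseteq> {xs. set xs \<subseteq> {..<?n} \<and> length xs = s}"
  proof safe
    fix xs x assume xs: "xs \<in> act_seqs d s" and "x \<in> set xs"
    then obtain i where i: "i < length xs" "xs ! i = x" by (auto simp: in_set_conv_nth)
    have "x < d (Suc i)" using xs i by (auto simp: act_seqs_def)
    also have "d (Suc i) \<le> ?n" using xs i by (auto simp: act_seqs_def intro!: member_le_sum)
    finally show "x < ?n" .
  qed (simp add: act_seqs_def)
  show "finite {xs. set xs \<subseteq> {..<?n} \<and> length xs = s}"
    by (rule finite_lists_length_eq) simp
qed

lemma obs_acts_measurable: "t \<le> T \<Longrightarrow> obs_acts A t \<in> measurable M (count_space UNIV)"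
proof (induction t)
  case 0 then show ?case by (simp add: obs_acts_def)
next
  case (Suc t)
  have "(\<lambda>\<omega>. (obs_acts A t \<omega>, A (Suc t) \<omega>)) \<in> measurable M (count_space UNIV \<Otimes>\<^sub>M count_space UNIV)"
    using Suc by (auto intro!: measurable_Pair A_meas)
  then have "(\<lambda>\<omega>. (obs_acts A t \<omega>, A (Suc t) \<omega>)) \<in> measurable M (count_space UNIV)"
    by (simp add: pair_measure_countable)
  then have "(\<lambda>\<omega>. case_prod (\<lambda>l x. l @ [x]) (obs_acts A t \<omega>, A (Suc t) \<omega>)) \<in> measurable M (count_space UNIV)"
    by (rule measurable_compose) simp
  then show ?case by (simp add: obs_acts_Suc)
qed

lemma pot_hist_measurable:
  assumes "t \<le> T" "a \<in> act_seqs d k" "t - 1 \<le> k"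
  shows "pot_hist S t a \<in> measurable M (hist_space SM t)"
  unfolding pot_hist_def hist_space_def
proof (intro measurable_Pair measurable_restrict)
  fix s assume s: "s \<in> {1..t}"
  have "take (s - 1) a \<in> act_seqs d (s - 1)" using assms s by (intro take_in_act_seqs) auto
  then show "S s (take (s - 1) a) \<in> measurable M SM" using s assms by (intro S_meas) auto
qed simp

lemma H_measurable[measurable]: "t \<in> {1..T} \<Longrightarrow> H t \<in> measurable M (hist_space SM t)"
  unfolding obs_hist_def
proof (rule measurable_compose_countable'[where I="act_seqs d (t - 1)"])
  assume t: "t \<in> {1..T}"
  show "pot_hist S t a \<in> measurable M (hist_space SM t)" if "a \<in> act_seqs d (t - 1)" for a
    using that t by (intro pot_hist_measurable) auto
  show "obs_acts A (t - 1) \<in> measurable M (count_space (act_seqs d (t - 1)))"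
    using t obs_acts_measurable[of "t - 1"] obs_acts_in_act_seqs[of "t - 1"]
    by (auto simp: measurable_count_space_eq2_countable)
qed simp

lemma A_measurable[measurable]: "t \<in> {1..T} \<Longrightarrow> A t \<in> measurable M (count_space UNIV)"
  by (rule A_meas)

lemma class_measurable:
  "t \<in> {1..T} \<Longrightarrow> \<rho> \<in> Pcl t \<Longrightarrow> \<rho> \<in> measurable (hist_space SM t) (count_space UNIV)"
  using Pi_meas by blast

lemma policy_class_in: "\<pi> \<in> policy_class T Pcl \<Longrightarrow> t \<in> {1..T} \<Longrightarrow> \<pi> t \<in> Pcl t"
  by (simp add: policy_class_def)

section \<open>Propensity scores\<close>

lemma propensity_measurable: "t \<in> {1..T} \<Longrightarrow> (\<lambda>h. e t h b) \<in> borel_measurable (hist_space SM t)"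
  using propensity[of t] unfolding is_propensity_def
  by (auto intro: measurable_Pair1[where f="\<lambda>(h, a). e t h a", simplified])

lemma integral_indicator_action_eq_propensity:
  "t \<in> {1..T} \<Longrightarrow> B \<in> sets (hist_space SM t) \<Longrightarrow>
   (\<integral>\<omega>. indicator B (H t \<omega>) * of_bool (A t \<omega> = b) \<partial>M) = (\<integral>\<omega>. indicator B (H t \<omega>) * e t (H t \<omega>) b \<partial>M)"
  using propensity[of t] unfolding is_propensity_def by auto

lemma integrable_action_indicator: "t \<in> {1..T} \<Longrightarrow> integrable M (\<lambda>\<omega>. of_bool (A t \<omega> = b) :: real)"
  by (intro integrable_const_bound[where B=1]) auto

lemma propensity_unit_interval:
  assumes t: "t \<in> {1..T}"
  shows "AE \<omega> in M. 0 \<le> e t (H t \<omega>) b \<and> e t (H t \<omega>) b \<le> 1"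
proof -
  note prems = finite_measure_axioms H_measurable[OF t] propensity_measurable[OF t]
    integrable_action_indicator[OF t]
  have "AE \<omega> in M. 0 \<le> e t (H t \<omega>) b"
    by (rule AE_comp_nonneg_of_indicator_integrals[OF prems])
       (auto simp: integral_indicator_action_eq_propensity[OF t])
  moreover have "AE \<omega> in M. e t (H t \<omega>) b \<le> 1"
    by (rule AE_comp_le_1_of_indicator_integrals[OF prems])
       (auto simp: integral_indicator_action_eq_propensity[OF t])
  ultimately show ?thesis by eventually_elim simp
qed

lemma integrable_propensity: assumes t: "t \<in> {1..T}" shows "integrable M (\<lambda>\<omega>. e t (H t \<omega>) b)"
proof (rule integrable_const_bound[where B=1])
  show "AE \<omega> in M. norm (e t (H t \<omega>) b) \<le> 1"
    using propensity_unit_interval[OF t, of b] by eventually_elim auto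
  show "(\<lambda>\<omega>. e t (H t \<omega>) b) \<in> borel_measurable M"
    using propensity_measurable[OF t] H_measurable[OF t] by (rule measurable_compose[rotated])
qed

lemma integral_action_eq_propensity:
  fixes F :: "'s hist \<Rightarrow> real"
  assumes t: "t \<in> {1..T}" and F: "F \<in> borel_measurable (hist_space SM t)"
  shows "integrable M (\<lambda>\<omega>. F (H t \<omega>) * of_bool (A t \<omega> = b)) \<longleftrightarrow> integrable M (\<lambda>\<omega>. F (H t \<omega>) * e t (H t \<omega>) b)"
    and "(\<integral>\<omega>. F (H t \<omega>) * of_bool (A t \<omega> = b) \<partial>M) = (\<integral>\<omega>. F (H t \<omega>) * e t (H t \<omega>) b \<partial>M)"
proof -
  have "AE \<omega> in M. 0 \<le> e t (H t \<omega>) b"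
    using propensity_unit_interval[OF t, of b] by eventually_elim simp
  note transfer = integral_comp_mult_eq_of_indicator_eq[OF H_measurable[OF t]
      integrable_action_indicator[OF t] _ integrable_propensity[OF t] this
      integral_indicator_action_eq_propensity[OF t] F]
  show "integrable M (\<lambda>\<omega>. F (H t \<omega>) * of_bool (A t \<omega> = b)) \<longleftrightarrow> integrable M (\<lambda>\<omega>. F (H t \<omega>) * e t (H t \<omega>) b)"
    and "(\<integral>\<omega>. F (H t \<omega>) * of_bool (A t \<omega> = b) \<partial>M) = (\<integral>\<omega>. F (H t \<omega>) * e t (H t \<omega>) b \<partial>M)"
    by (rule transfer; simp)+
qed

section \<open>Q-functions\<close>

abbreviation tail_in_class :: "(nat \<Rightarrow> 's hist \<Rightarrow> nat) \<Rightarrow> bool" where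
  "tail_in_class \<pi> \<equiv> \<forall>t\<in>{2..T}. \<pi> t \<in> Pcl t"

lemma policy_class_tail_in_class: "\<pi> \<in> policy_class T Pcl \<Longrightarrow> tail_in_class \<pi>"
  by (simp add: policy_class_def)

abbreviation Qpi :: "(nat \<Rightarrow> 's hist \<Rightarrow> nat) \<Rightarrow> nat \<Rightarrow> 'w \<Rightarrow> real" where
  "Qpi \<pi> t \<omega> \<equiv> Qf \<pi> t (H t \<omega>) (\<pi> t (H t \<omega>))"

definition pseudo_outcome :: "(nat \<Rightarrow> 's hist \<Rightarrow> nat) \<Rightarrow> nat \<Rightarrow> 'w \<Rightarrow> real" where
  "pseudo_outcome \<pi> t \<omega> = Y t (obs_acts A t \<omega>) \<omega> + (if t < T then Qpi \<pi> (Suc t) \<omega> else 0)"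

lemma pseudo_outcome_cond_reg:
  "tail_in_class \<pi> \<Longrightarrow> t \<in> {1..T} \<Longrightarrow> is_cond_reg M SM S A t (pseudo_outcome \<pi> t) (Qf \<pi> t)"
  using Q unfolding is_Q_family_def pseudo_outcome_def[abs_def] by blast

lemma Q_measurable:
  "tail_in_class \<pi> \<Longrightarrow> t \<in> {1..T} \<Longrightarrow> (\<lambda>h. Qf \<pi> t h a) \<in> borel_measurable (hist_space SM t)"
  using pseudo_outcome_cond_reg[of \<pi> t] unfolding is_cond_reg_def
  by (auto intro: measurable_Pair1[where f="\<lambda>(h, a). Qf \<pi> t h a", simplified])

lemma integrable_pseudo_outcome:
  "tail_in_class \<pi> \<Longrightarrow> t \<in> {1..T} \<Longrightarrow> integrable M (pseudo_outcome \<pi> t)"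
  using pseudo_outcome_cond_reg[of \<pi> t] unfolding is_cond_reg_def by blast

lemma integrable_Q_obs:
  "tail_in_class \<pi> \<Longrightarrow> t \<in> {1..T} \<Longrightarrow> integrable M (\<lambda>\<omega>. Qf \<pi> t (H t \<omega>) (A t \<omega>))"
  using pseudo_outcome_cond_reg[of \<pi> t] unfolding is_cond_reg_def by blast

lemma integrable_Q_action:
  assumes "tail_in_class \<pi>" "t \<in> {1..T}"
  shows "integrable M (\<lambda>\<omega>. of_bool (A t \<omega> = a) * Qf \<pi> t (H t \<omega>) a)"
proof (rule Bochner_Integration.integrable_bound[OF integrable_Q_obs[OF assms]])
  note [measurable] = Q_measurable[OF assms] H_measurable[OF assms(2)] A_measurable[OF assms(2)]
  show "(\<lambda>\<omega>. of_bool (A t \<omega> = a) * Qf \<pi> t (H t \<omega>) a) \<in> borel_measurable M" by measurable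
qed auto

lemma integral_pseudo_outcome_eq_Q:
  fixes F :: "'s hist \<Rightarrow> real"
  assumes \<pi>: "tail_in_class \<pi>" and t: "t \<in> {1..T}"
    and F[measurable]: "F \<in> borel_measurable (hist_space SM t)" and F_bound: "\<And>h. \<bar>F h\<bar> \<le> c"
  shows "(\<integral>\<omega>. F (H t \<omega>) * of_bool (A t \<omega> = a) * pseudo_outcome \<pi> t \<omega> \<partial>M)
       = (\<integral>\<omega>. F (H t \<omega>) * of_bool (A t \<omega> = a) * Qf \<pi> t (H t \<omega>) a \<partial>M)"
proof -
  note [measurable] = Q_measurable[OF \<pi> t] H_measurable[OF t] A_measurable[OF t]
  have [measurable]: "pseudo_outcome \<pi> t \<in> borel_measurable M"
    using integrable_pseudo_outcome[OF \<pi> t] by (rule borel_measurable_integrable)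
  define g where "g \<omega> = of_bool (A t \<omega> = a) * pseudo_outcome \<pi> t \<omega> - of_bool (A t \<omega> = a) * Qf \<pi> t (H t \<omega>) a" for \<omega>
  have int_outcome: "integrable M (\<lambda>\<omega>. of_bool (A t \<omega> = a) * pseudo_outcome \<pi> t \<omega>)"
    by (rule Bochner_Integration.integrable_bound[OF integrable_pseudo_outcome[OF \<pi> t]]) auto
  have int_Q: "integrable M (\<lambda>\<omega>. of_bool (A t \<omega> = a) * Qf \<pi> t (H t \<omega>) a)"
    by (rule integrable_Q_action[OF \<pi> t])
  have g: "integrable M g" unfolding g_def using int_outcome int_Q by auto
  then have [measurable]: "g \<in> borel_measurable M" by (rule borel_measurable_integrable)
  have zero: "(\<integral>\<omega>. indicator B (H t \<omega>) * g \<omega> \<partial>M) = 0" if B: "B \<in> sets (hist_space SM t)" for B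
  proof -
    have "(\<integral>\<omega>. indicator B (H t \<omega>) * of_bool (A t \<omega> = a) * pseudo_outcome \<pi> t \<omega> \<partial>M) =
        (\<integral>\<omega>. indicator B (H t \<omega>) * of_bool (A t \<omega> = a) * Qf \<pi> t (H t \<omega>) a \<partial>M)"
      using pseudo_outcome_cond_reg[OF \<pi> t] B unfolding is_cond_reg_def by blast
    moreover note int_outcome[THEN integrable_indicator_comp_mult[OF H_measurable[OF t] B]]
      int_Q[THEN integrable_indicator_comp_mult[OF H_measurable[OF t] B]]
    ultimately show ?thesis by (simp add: g_def right_diff_distrib mult.assoc)
  qed
  have "(\<integral>\<omega>. F (H t \<omega>) * g \<omega> \<partial>M) = 0"
  proof (rule integral_comp_mult_eq_0[OF H_measurable[OF t] g _ F])
    show "integrable M (\<lambda>\<omega>. F (H t \<omega>) * g \<omega>)"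
      by (rule integrable_bounded_mult[OF g _ F_bound]) measurable
  qed (rule zero)
  moreover have "integrable M (\<lambda>\<omega>. F (H t \<omega>) * (of_bool (A t \<omega> = a) * pseudo_outcome \<pi> t \<omega>))"
    by (rule integrable_bounded_mult[OF int_outcome _ F_bound]) measurable
  moreover have "integrable M (\<lambda>\<omega>. F (H t \<omega>) * (of_bool (A t \<omega> = a) * Qf \<pi> t (H t \<omega>) a))"
    by (rule integrable_bounded_mult[OF int_Q _ F_bound]) measurable
  ultimately show ?thesis by (simp add: g_def right_diff_distrib mult.assoc)
qed

lemma pseudo_outcome_less: "t < T \<Longrightarrow> pseudo_outcome \<pi> t \<omega> = Y t (obs_acts A t \<omega>) \<omega> + Qpi \<pi> (Suc t) \<omega>"
  by (simp add: pseudo_outcome_def)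

lemma pseudo_outcome_last: "pseudo_outcome \<pi> T \<omega> = Y T (obs_acts A T \<omega>) \<omega>"
  by (simp add: pseudo_outcome_def)

section \<open>Sequential ignorability\<close>

abbreviation hist_sigma :: "nat \<Rightarrow> 'w measure" where
  "hist_sigma t \<equiv> vimage_algebra (space M) (H t) (hist_space SM t)"

lemma action_indicator_measurable[measurable]:
  assumes "t \<in> {1..T}" shows "(\<lambda>\<omega>. indicator {b} (A t \<omega>) :: real) \<in> borel_measurable M"
proof -
  have "(\<lambda>x::nat. indicator {b} x :: real) \<in> borel_measurable (count_space UNIV)" by simp
  then show ?thesis using A_measurable[OF assms] by (rule measurable_compose[rotated])
qed

lemma sigma_finite_subalgebra_hist_sigma:
  assumes t: "t \<in> {1..T}" shows "sigma_finite_subalgebra M (hist_sigma t)"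
proof -
  have "finite_measure_subalgebra M (hist_sigma t)"
    by unfold_locales
       (use H_measurable[OF t] in \<open>auto simp: subalgebra_def sets_vimage_algebra2 measurable_def\<close>)
  then show ?thesis by (rule finite_measure_subalgebra_is_sigma_finite)
qed

lemma measurable_hist_sigma:
  assumes t: "t \<in> {1..T}" and G: "G \<in> borel_measurable (hist_space SM t)"
  shows "(\<lambda>\<omega>. G (H t \<omega>)) \<in> borel_measurable (hist_sigma t)"
proof -
  have "H t \<in> measurable (hist_sigma t) (hist_space SM t)"
    by (rule measurable_vimage_algebra1) (use H_measurable[OF t] in \<open>auto simp: measurable_def\<close>)
  then show ?thesis using G by (rule measurable_compose)
qed

lemma cond_exp_action_eq_propensity:
  assumes t: "t \<in> {1..T}"
  shows "AE \<omega> in M. real_cond_exp M (hist_sigma t) (\<lambda>\<omega>. indicator {b} (A t \<omega>)) \<omega> = e t (H t \<omega>) b"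
proof -
  interpret sigma_finite_subalgebra M "hist_sigma t" by (rule sigma_finite_subalgebra_hist_sigma[OF t])
  note [measurable] = H_measurable[OF t] A_measurable[OF t] propensity_measurable[OF t]
  show ?thesis
  proof (rule real_cond_exp_charact)
    fix C assume "C \<in> sets (hist_sigma t)"
    then obtain B where B[measurable]: "B \<in> sets (hist_space SM t)" and C: "C = H t -` B \<inter> space M"
      using H_measurable[OF t] by (auto simp: sets_vimage_algebra2 measurable_def)
    have "(\<integral>\<omega>\<in>C. (indicator {b} (A t \<omega>) :: real) \<partial>M) = (\<integral>\<omega>. indicator B (H t \<omega>) * of_bool (A t \<omega> = b) \<partial>M)"
      unfolding C set_lebesgue_integral_def
      by (intro Bochner_Integration.integral_cong) (auto simp: indicator_def)
    also have "\<dots> = (\<integral>\<omega>. indicator B (H t \<omega>) * e t (H t \<omega>) b \<partial>M)"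
      by (rule integral_indicator_action_eq_propensity[OF t B])
    also have "\<dots> = (\<integral>\<omega>\<in>C. e t (H t \<omega>) b \<partial>M)"
      unfolding C set_lebesgue_integral_def
      by (intro Bochner_Integration.integral_cong) (auto simp: indicator_def)
    finally show "(\<integral>\<omega>\<in>C. (indicator {b} (A t \<omega>) :: real) \<partial>M) = (\<integral>\<omega>\<in>C. e t (H t \<omega>) b \<partial>M)" .
  next
    show "integrable M (\<lambda>\<omega>. indicator {b} (A t \<omega>) :: real)"
      by (rule integrable_const_bound[where B=1]) (auto intro: action_indicator_measurable t)
    show "integrable M (\<lambda>\<omega>. e t (H t \<omega>) b)" by (rule integrable_propensity[OF t])
    show "(\<lambda>\<omega>. e t (H t \<omega>) b) \<in> borel_measurable (hist_sigma t)"
      by (rule measurable_hist_sigma[OF t propensity_measurable[OF t]])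
  qed
qed

text \<open>The potential outcomes and states that sequential ignorability makes conditionally
  independent of \<open>A t\<close> given \<open>H t\<close>.\<close>

definition future_space :: "nat \<Rightarrow> ((nat \<Rightarrow> real) \<times> (nat \<Rightarrow> 's)) measure" where
  "future_space t = (\<Pi>\<^sub>M s\<in>{t..T}. (borel :: real measure)) \<Otimes>\<^sub>M (\<Pi>\<^sub>M s\<in>{Suc t..T}. SM)"

definition future :: "nat \<Rightarrow> nat list \<Rightarrow> 'w \<Rightarrow> (nat \<Rightarrow> real) \<times> (nat \<Rightarrow> 's)" where
  "future t a \<omega> = (restrict (\<lambda>s. Y s (take s a) \<omega>) {t..T}, restrict (\<lambda>s. S s (take (s - 1) a) \<omega>) {Suc t..T})"

lemma future_measurable:
  assumes t: "t \<in> {1..T}" and a: "a \<in> act_seqs d T"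
  shows "future t a \<in> measurable M (future_space t)"
  unfolding future_def future_space_def
proof (intro measurable_Pair measurable_restrict)
  fix s assume s: "s \<in> {t..T}"
  have "take s a \<in> act_seqs d s" using s a by (intro take_in_act_seqs) auto
  then show "(\<lambda>\<omega>. Y s (take s a) \<omega>) \<in> borel_measurable M"
    using s t by (intro borel_measurable_integrable Y_int) auto
next
  fix s assume s: "s \<in> {Suc t..T}"
  have "take (s - 1) a \<in> act_seqs d (s - 1)" using s a by (intro take_in_act_seqs) auto
  then show "(\<lambda>\<omega>. S s (take (s - 1) a) \<omega>) \<in> measurable M SM"
    using s t by (intro S_meas) auto
qed

lemma integral_rectangle_action_eq_propensity:
  assumes t: "t \<in> {1..T}" and a: "a \<in> act_seqs d T"
    and B[measurable]: "B \<in> sets (hist_space SM t)" and C[measurable]: "C \<in> sets (future_space t)"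
  shows "(\<integral>\<omega>. indicator B (H t \<omega>) * indicator C (future t a \<omega>) * of_bool (A t \<omega> = b) \<partial>M)
       = (\<integral>\<omega>. indicator B (H t \<omega>) * indicator C (future t a \<omega>) * e t (H t \<omega>) b \<partial>M)"
proof -
  interpret sigma_finite_subalgebra M "hist_sigma t" by (rule sigma_finite_subalgebra_hist_sigma[OF t])
  note [measurable] = H_measurable[OF t] A_measurable[OF t] propensity_measurable[OF t] future_measurable[OF t a]
  let ?CE = "real_cond_exp M (hist_sigma t)"
  let ?ZA = "\<lambda>\<omega>. indicator C (future t a \<omega>) * indicator {b} (A t \<omega>) :: real"
  let ?Z = "\<lambda>\<omega>. indicator C (future t a \<omega>) :: real"
  have cond_indep: "AE \<omega> in M. ?CE ?ZA \<omega> = ?CE ?Z \<omega> * ?CE (\<lambda>\<omega>. indicator {b} (A t \<omega>)) \<omega>"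
    using ignorability t a C
    unfolding seq_ignorability_def cond_indep_def future_space_def future_def[abs_def] by auto
  have B_hist_sigma: "(\<lambda>\<omega>. indicator B (H t \<omega>) :: real) \<in> borel_measurable (hist_sigma t)"
    by (rule measurable_hist_sigma[OF t]) measurable
  have Be_hist_sigma: "(\<lambda>\<omega>. indicator B (H t \<omega>) * e t (H t \<omega>) b) \<in> borel_measurable (hist_sigma t)"
    by (rule measurable_hist_sigma[OF t]) measurable
  have "(\<integral>\<omega>. indicator B (H t \<omega>) * indicator C (future t a \<omega>) * of_bool (A t \<omega> = b) \<partial>M)
      = (\<integral>\<omega>. indicator B (H t \<omega>) * ?CE ?ZA \<omega> \<partial>M)"
    by (subst real_cond_exp_intg(2)[OF _ B_hist_sigma])
       (auto intro!: integrable_const_bound[where B=1] Bochner_Integration.integral_cong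
         simp: indicator_def)
  also have "\<dots> = (\<integral>\<omega>. (indicator B (H t \<omega>) * e t (H t \<omega>) b) * ?CE ?Z \<omega> \<partial>M)"
  proof (rule integral_cong_AE)
    show "AE \<omega> in M. indicator B (H t \<omega>) * ?CE ?ZA \<omega> = indicator B (H t \<omega>) * e t (H t \<omega>) b * ?CE ?Z \<omega>"
      using cond_indep cond_exp_action_eq_propensity[OF t, of b] by eventually_elim simp
  qed measurable
  also have "\<dots> = (\<integral>\<omega>. (indicator B (H t \<omega>) * e t (H t \<omega>) b) * ?Z \<omega> \<partial>M)"
  proof (rule real_cond_exp_intg(2)[OF _ Be_hist_sigma])
    show "integrable M (\<lambda>\<omega>. (indicator B (H t \<omega>) * e t (H t \<omega>) b) * ?Z \<omega>)"
    proof (rule integrable_const_bound[where B=1])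
      show "AE \<omega> in M. norm (indicator B (H t \<omega>) * e t (H t \<omega>) b * ?Z \<omega>) \<le> 1"
        using propensity_unit_interval[OF t, of b] by eventually_elim (auto simp: indicator_def)
    qed measurable
  qed measurable
  finally show ?thesis by (simp add: ac_simps)
qed

lemma integral_future_action_eq_propensity:
  fixes K :: "'s hist \<times> ((nat \<Rightarrow> real) \<times> (nat \<Rightarrow> 's)) \<Rightarrow> real"
  assumes t: "t \<in> {1..T}" and a: "a \<in> act_seqs d T"
    and K: "K \<in> borel_measurable (hist_space SM t \<Otimes>\<^sub>M future_space t)"
  shows "(\<integral>\<omega>. K (H t \<omega>, future t a \<omega>) * of_bool (A t \<omega> = b) \<partial>M) =
         (\<integral>\<omega>. K (H t \<omega>, future t a \<omega>) * e t (H t \<omega>) b \<partial>M)"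
proof -
  let ?E = "{B \<times> C | B C. B \<in> sets (hist_space SM t) \<and> C \<in> sets (future_space t)}"
  have X: "(\<lambda>\<omega>. (H t \<omega>, future t a \<omega>)) \<in> measurable M (hist_space SM t \<Otimes>\<^sub>M future_space t)"
    using H_measurable[OF t] future_measurable[OF t a] by measurable
  have e_nonneg: "AE \<omega> in M. 0 \<le> e t (H t \<omega>) b"
    using propensity_unit_interval[OF t, of b] by eventually_elim simp
  show ?thesis
  proof (rule integral_comp_mult_eq_of_generator(2)[OF X integrable_action_indicator[OF t] _
        integrable_propensity[OF t] e_nonneg, where E="?E", OF _ _ _ _ _ _ K])
    show "sets (hist_space SM t \<Otimes>\<^sub>M future_space t) = sigma_sets (space (hist_space SM t \<Otimes>\<^sub>M future_space t)) ?E"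
      by (simp add: sets_pair_measure space_pair_measure)
    show "?E \<subseteq> Pow (space (hist_space SM t \<Otimes>\<^sub>M future_space t))"
      using pair_measure_closed by (simp add: space_pair_measure)
    show "Int_stable ?E" by (rule Int_stable_pair_measure_generator)
    show "space (hist_space SM t \<Otimes>\<^sub>M future_space t) \<in> ?E"
      by (auto simp: space_pair_measure)
    fix R assume "R \<in> ?E"
    then obtain B C where "R = B \<times> C" "B \<in> sets (hist_space SM t)" "C \<in> sets (future_space t)"
      by auto
    then show "(\<integral>\<omega>. indicator R (H t \<omega>, future t a \<omega>) * of_bool (A t \<omega> = b) \<partial>M) =
        (\<integral>\<omega>. indicator R (H t \<omega>, future t a \<omega>) * e t (H t \<omega>) b \<partial>M)"
      using integral_rectangle_action_eq_propensity[OF t a, of B C b] by (simp add: indicator_times)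
  qed simp
qed

section \<open>Inverse propensity weights\<close>

text \<open>The weight is cut off where the propensity is below \<open>\<eta>\<close>, so that it is bounded by
  \<open>1 / \<eta>\<close> everywhere; by overlap, it agrees a.e. with \<open>1{\<rho> H = b} / e(H, b)\<close>.\<close>

definition ipw :: "nat \<Rightarrow> ('s hist \<Rightarrow> nat) \<Rightarrow> 's hist \<Rightarrow> nat \<Rightarrow> real" where
  "ipw t \<rho> h b = of_bool (\<rho> h = b \<and> \<eta> \<le> e t h b) / e t h b"

lemma ipw_nonneg: "0 \<le> ipw t \<rho> h b"
  using eta by (auto simp: ipw_def)

lemma ipw_le: "ipw t \<rho> h b \<le> 1 / \<eta>"
  using eta by (auto simp: ipw_def divide_simps)

lemma abs_ipw_le: "\<bar>ipw t \<rho> h b\<bar> \<le> 1 / \<eta>"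
  using ipw_nonneg ipw_le by (simp add: abs_of_nonneg)

lemma abs_mult_ipw_le: "\<bar>F h\<bar> \<le> c \<Longrightarrow> \<bar>F h * ipw t \<rho> h b\<bar> \<le> c / \<eta>"
  using mult_mono[OF _ abs_ipw_le, of "\<bar>F h\<bar>" c] by (auto simp: abs_mult)

lemma ipw_measurable[measurable]:
  assumes t: "t \<in> {1..T}" and \<rho>: "\<rho> \<in> Pcl t"
  shows "(\<lambda>h. ipw t \<rho> h b) \<in> borel_measurable (hist_space SM t)"
proof -
  note [measurable] = propensity_measurable[OF t] class_measurable[OF t \<rho>]
  show ?thesis unfolding ipw_def by measurable
qed

lemma ipw_obs_measurable:
  assumes t: "t \<in> {1..T}" and \<rho>: "\<rho> \<in> Pcl t"
  shows "(\<lambda>\<omega>. ipw t \<rho> (H t \<omega>) (A t \<omega>)) \<in> borel_measurable M"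
  by (rule measurable_compose_countable'[where I=UNIV and f="\<lambda>i \<omega>. ipw t \<rho> (H t \<omega>) i"])
     (use ipw_measurable[OF t \<rho>] H_measurable[OF t] A_measurable[OF t] in auto)

lemma overlap_policy:
  assumes t: "t \<in> {1..T}" and \<rho>: "\<rho> \<in> Pcl t"
  shows "AE \<omega> in M. \<eta> \<le> e t (H t \<omega>) (\<rho> (H t \<omega>))"
  using overlap[OF t] by eventually_elim (use \<rho> in blast)

lemma integral_ipw_action_eq_policy:
  fixes G :: "'s hist \<Rightarrow> real"
  assumes t: "t \<in> {1..T}" and \<rho>: "\<rho> \<in> Pcl t" and G[measurable]: "G \<in> borel_measurable (hist_space SM t)"
  shows "integrable M (\<lambda>\<omega>. G (H t \<omega>) * ipw t \<rho> (H t \<omega>) b * of_bool (A t \<omega> = b)) \<longleftrightarrow>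
         integrable M (\<lambda>\<omega>. G (H t \<omega>) * of_bool (\<rho> (H t \<omega>) = b))"
    and "(\<integral>\<omega>. G (H t \<omega>) * ipw t \<rho> (H t \<omega>) b * of_bool (A t \<omega> = b) \<partial>M) =
         (\<integral>\<omega>. G (H t \<omega>) * of_bool (\<rho> (H t \<omega>) = b) \<partial>M)"
proof -
  note [measurable] = propensity_measurable[OF t] class_measurable[OF t \<rho>] ipw_measurable[OF t \<rho>]
    H_measurable[OF t]
  have F: "(\<lambda>h. G h * ipw t \<rho> h b) \<in> borel_measurable (hist_space SM t)" by measurable
  have ae: "AE \<omega> in M. G (H t \<omega>) * ipw t \<rho> (H t \<omega>) b * e t (H t \<omega>) b = G (H t \<omega>) * of_bool (\<rho> (H t \<omega>) = b)"
    using overlap_policy[OF t \<rho>] by eventually_elim (use eta in \<open>auto simp: ipw_def\<close>)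
  have m1: "(\<lambda>\<omega>. G (H t \<omega>) * ipw t \<rho> (H t \<omega>) b * e t (H t \<omega>) b) \<in> borel_measurable M" by measurable
  have m2: "(\<lambda>\<omega>. G (H t \<omega>) * of_bool (\<rho> (H t \<omega>) = b)) \<in> borel_measurable M" by measurable
  show "integrable M (\<lambda>\<omega>. G (H t \<omega>) * ipw t \<rho> (H t \<omega>) b * of_bool (A t \<omega> = b)) \<longleftrightarrow>
         integrable M (\<lambda>\<omega>. G (H t \<omega>) * of_bool (\<rho> (H t \<omega>) = b))"
    using integral_action_eq_propensity(1)[OF t F, of b] integrable_cong_AE[OF m1 m2 ae] by simp
  show "(\<integral>\<omega>. G (H t \<omega>) * ipw t \<rho> (H t \<omega>) b * of_bool (A t \<omega> = b) \<partial>M) =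
         (\<integral>\<omega>. G (H t \<omega>) * of_bool (\<rho> (H t \<omega>) = b) \<partial>M)"
    using integral_action_eq_propensity(2)[OF t F, of b] integral_cong_AE[OF m1 m2 ae] by simp
qed

lemma integrable_Q_policy_action:
  assumes \<pi>: "tail_in_class \<pi>" and t: "t \<in> {1..T}" and \<rho>: "\<rho> \<in> Pcl t"
  shows "integrable M (\<lambda>\<omega>. Qf \<pi> t (H t \<omega>) b * of_bool (\<rho> (H t \<omega>) = b))"
proof -
  note [measurable] = ipw_measurable[OF t \<rho>] Q_measurable[OF \<pi> t] H_measurable[OF t]
  have "integrable M (\<lambda>\<omega>. ipw t \<rho> (H t \<omega>) b * (of_bool (A t \<omega> = b) * Qf \<pi> t (H t \<omega>) b))"
    by (rule integrable_bounded_mult[OF integrable_Q_action[OF \<pi> t] _ abs_ipw_le]) measurable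
  then have "integrable M (\<lambda>\<omega>. Qf \<pi> t (H t \<omega>) b * ipw t \<rho> (H t \<omega>) b * of_bool (A t \<omega> = b))"
    by (simp add: ac_simps)
  then show ?thesis using integral_ipw_action_eq_policy(1)[OF t \<rho>, of "\<lambda>h. Qf \<pi> t h b" b] by simp
qed

lemma Q_policy_eq_sum:
  "t \<in> {1..T} \<Longrightarrow> \<rho> \<in> Pcl t \<Longrightarrow>
   Qf \<pi> t (H t \<omega>) (\<rho> (H t \<omega>)) = (\<Sum>b<d t. Qf \<pi> t (H t \<omega>) b * of_bool (\<rho> (H t \<omega>) = b))"
  using sum_lessThan_of_bool_eq[OF Pi_range, where f="\<lambda>b. Qf \<pi> t (H t \<omega>) b"] by (simp add: ac_simps)

lemma integrable_Q_policy:
  assumes \<pi>: "tail_in_class \<pi>" and t: "t \<in> {1..T}" and \<rho>: "\<rho> \<in> Pcl t"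
  shows "integrable M (\<lambda>\<omega>. Qf \<pi> t (H t \<omega>) (\<rho> (H t \<omega>)))"
  unfolding Q_policy_eq_sum[OF t \<rho>]
  by (intro Bochner_Integration.integrable_sum integrable_Q_policy_action[OF \<pi> t \<rho>])

lemma integrable_Qpi: "\<sigma> \<in> policy_class T Pcl \<Longrightarrow> t \<in> {1..T} \<Longrightarrow> integrable M (Qpi \<sigma> t)"
  by (rule integrable_Q_policy[OF policy_class_tail_in_class _ policy_class_in])

lemma integrable_weighted_Qpi:
  assumes "\<sigma> \<in> policy_class T Pcl" and t: "t \<in> {1..T}"
    and \<phi>: "\<phi> \<in> borel_measurable (hist_space SM t)" and "\<And>h. \<bar>\<phi> h\<bar> \<le> c"
  shows "integrable M (\<lambda>\<omega>. \<phi> (H t \<omega>) * Qpi \<sigma> t \<omega>)"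
  by (rule integrable_bounded_mult[where c=c, OF integrable_Qpi measurable_compose[OF H_measurable[OF t] \<phi>]])
     (use assms in auto)

text \<open>Overlap lets a.e. statements about the observed action be transferred to any policy of
  the class.\<close>

lemma AE_policy_of_AE_action:
  assumes t: "t \<in> {1..T}" and \<rho>: "\<rho> \<in> Pcl t"
    and P: "\<And>b. {h \<in> space (hist_space SM t). P h b} \<in> sets (hist_space SM t)"
    and ae: "AE \<omega> in M. P (H t \<omega>) (A t \<omega>)"
  shows "AE \<omega> in M. P (H t \<omega>) (\<rho> (H t \<omega>))"
proof -
  note [measurable] = class_measurable[OF t \<rho>] ipw_measurable[OF t \<rho>] H_measurable[OF t] A_measurable[OF t]
  have "AE \<omega> in M. \<rho> (H t \<omega>) = b \<longrightarrow> P (H t \<omega>) b" for b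
  proof -
    define B where "B = {h \<in> space (hist_space SM t). \<rho> h = b \<and> \<not> P h b}"
    have B[measurable]: "B \<in> sets (hist_space SM t)"
    proof -
      have "B = {h \<in> space (hist_space SM t). \<rho> h = b} - {h \<in> space (hist_space SM t). P h b}"
        by (auto simp: B_def)
      then show ?thesis using P[of b] by simp
    qed
    have "(\<integral>\<omega>. indicator B (H t \<omega>) * ipw t \<rho> (H t \<omega>) b * of_bool (A t \<omega> = b) \<partial>M) = (\<integral>\<omega>. 0 \<partial>M)"
      by (rule integral_cong_AE) (use ae in \<open>measurable, auto simp: B_def elim!: eventually_mono\<close>)
    then have "(\<integral>\<omega>. (indicator B (H t \<omega>) :: real) * of_bool (\<rho> (H t \<omega>) = b) \<partial>M) = 0"
      using integral_ipw_action_eq_policy(2)[OF t \<rho>, of "indicator B" b] by simp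
    then have "AE \<omega> in M. indicator B (H t \<omega>) * of_bool (\<rho> (H t \<omega>) = b) = (0::real)"
      by (subst (asm) integral_nonneg_eq_0_iff_AE) (auto intro!: integrable_const_bound[where B=1])
    then show ?thesis using AE_space
      by eventually_elim
         (auto simp: B_def indicator_def measurable_space[OF H_measurable[OF t]] split: if_splits)
  qed
  then have "AE \<omega> in M. \<forall>b. \<rho> (H t \<omega>) = b \<longrightarrow> P (H t \<omega>) b"
    unfolding AE_all_countable by blast
  then show ?thesis by eventually_elim auto
qed

lemma Q_policy_le_of_action:
  assumes \<pi>: "tail_in_class \<pi>" and \<pi>': "tail_in_class \<pi>'" and t: "t \<in> {1..T}" and \<rho>: "\<rho> \<in> Pcl t"
    and le: "AE \<omega> in M. Qf \<pi> t (H t \<omega>) (A t \<omega>) \<le> Qf \<pi>' t (H t \<omega>) (A t \<omega>)"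
  shows "AE \<omega> in M. Qf \<pi> t (H t \<omega>) (\<rho> (H t \<omega>)) \<le> Qf \<pi>' t (H t \<omega>) (\<rho> (H t \<omega>))"
proof (rule AE_policy_of_AE_action[OF t \<rho> _ le])
  note [measurable] = Q_measurable[OF \<pi> t] Q_measurable[OF \<pi>' t]
  show "{h \<in> space (hist_space SM t). Qf \<pi> t h b \<le> Qf \<pi>' t h b} \<in> sets (hist_space SM t)" for b
    by measurable
qed

lemma Q_policy_eq_of_action:
  assumes \<pi>: "tail_in_class \<pi>" and \<pi>': "tail_in_class \<pi>'" and t: "t \<in> {1..T}" and \<rho>: "\<rho> \<in> Pcl t"
    and eq: "AE \<omega> in M. Qf \<pi> t (H t \<omega>) (A t \<omega>) = Qf \<pi>' t (H t \<omega>) (A t \<omega>)"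
  shows "AE \<omega> in M. Qf \<pi> t (H t \<omega>) (\<rho> (H t \<omega>)) = Qf \<pi>' t (H t \<omega>) (\<rho> (H t \<omega>))"
proof (rule AE_policy_of_AE_action[OF t \<rho> _ eq])
  note [measurable] = Q_measurable[OF \<pi> t] Q_measurable[OF \<pi>' t]
  show "{h \<in> space (hist_space SM t). Qf \<pi> t h b = Qf \<pi>' t h b} \<in> sets (hist_space SM t)" for b
    by measurable
qed

lemma Q_action_mono:
  assumes \<pi>: "tail_in_class \<pi>" and \<pi>': "tail_in_class \<pi>'" and t: "t \<in> {1..T}"
    and le: "AE \<omega> in M. pseudo_outcome \<pi> t \<omega> \<le> pseudo_outcome \<pi>' t \<omega>"
  shows "AE \<omega> in M. Qf \<pi> t (H t \<omega>) (A t \<omega>) \<le> Qf \<pi>' t (H t \<omega>) (A t \<omega>)"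
proof -
  note [measurable] = Q_measurable[OF \<pi> t] Q_measurable[OF \<pi>' t] H_measurable[OF t] A_measurable[OF t]
  have "AE \<omega> in M. A t \<omega> = a \<longrightarrow> Qf \<pi> t (H t \<omega>) a \<le> Qf \<pi>' t (H t \<omega>) a" for a
  proof -
    define B where "B = {h \<in> space (hist_space SM t). Qf \<pi>' t h a < Qf \<pi> t h a}"
    have B[measurable]: "B \<in> sets (hist_space SM t)" unfolding B_def by measurable
    have B_bound: "\<bar>indicator B h :: real\<bar> \<le> 1" for h by (auto simp: indicator_def)
    let ?I = "\<lambda>\<omega>. indicator B (H t \<omega>) * of_bool (A t \<omega> = a) :: real"
    have int_Q: "integrable M (\<lambda>\<omega>. ?I \<omega> * Qf \<sigma> t (H t \<omega>) a)" if \<sigma>: "tail_in_class \<sigma>" for \<sigma>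
      using integrable_indicator_comp_mult[OF H_measurable[OF t] B integrable_Q_action[OF \<sigma> t, of a]]
      by (simp add: mult.assoc)
    have int_outcome: "integrable M (\<lambda>\<omega>. ?I \<omega> * pseudo_outcome \<sigma> t \<omega>)" if \<sigma>: "tail_in_class \<sigma>" for \<sigma>
    proof (rule integrable_bounded_mult[OF integrable_pseudo_outcome[OF \<sigma> t], where c=1])
      show "?I \<in> borel_measurable M" by measurable
    qed (auto simp: indicator_def)
    have eq_Q: "(\<integral>\<omega>. ?I \<omega> * pseudo_outcome \<sigma> t \<omega> \<partial>M) = (\<integral>\<omega>. ?I \<omega> * Qf \<sigma> t (H t \<omega>) a \<partial>M)"
      if \<sigma>: "tail_in_class \<sigma>" for \<sigma>
      by (rule integral_pseudo_outcome_eq_Q[OF \<sigma> t _ B_bound]) measurable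
    let ?D = "\<lambda>\<omega>. ?I \<omega> * Qf \<pi> t (H t \<omega>) a - ?I \<omega> * Qf \<pi>' t (H t \<omega>) a"
    have D_nonneg: "AE \<omega> in M. 0 \<le> ?D \<omega>"
      by (rule AE_I2) (auto simp: B_def indicator_def)
    have "(\<integral>\<omega>. ?D \<omega> \<partial>M) = (\<integral>\<omega>. ?I \<omega> * pseudo_outcome \<pi> t \<omega> - ?I \<omega> * pseudo_outcome \<pi>' t \<omega> \<partial>M)"
      using eq_Q[OF \<pi>] eq_Q[OF \<pi>'] int_Q[OF \<pi>] int_Q[OF \<pi>'] int_outcome[OF \<pi>] int_outcome[OF \<pi>'] by simp
    also have "\<dots> \<le> (\<integral>\<omega>. 0 \<partial>M)"
      using le int_outcome[OF \<pi>] int_outcome[OF \<pi>']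
      by (intro integral_mono_AE) (auto simp: indicator_def elim!: eventually_mono)
    finally have "(\<integral>\<omega>. ?D \<omega> \<partial>M) = 0"
      using integral_nonneg_AE[OF D_nonneg] by simp
    then have "AE \<omega> in M. ?D \<omega> = 0"
      using int_Q[OF \<pi>] int_Q[OF \<pi>'] D_nonneg by (subst (asm) integral_nonneg_eq_0_iff_AE) auto
    then show ?thesis using AE_space
      by eventually_elim (auto simp: B_def indicator_def measurable_space[OF H_measurable[OF t]] split: if_splits)
  qed
  then have "AE \<omega> in M. \<forall>a. A t \<omega> = a \<longrightarrow> Qf \<pi> t (H t \<omega>) a \<le> Qf \<pi>' t (H t \<omega>) a"
    unfolding AE_all_countable by blast
  then show ?thesis by eventually_elim auto
qed

lemma Q_action_cong:
  assumes \<pi>: "tail_in_class \<pi>" and \<pi>': "tail_in_class \<pi>'" and t: "t \<in> {1..T}"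
    and eq: "AE \<omega> in M. pseudo_outcome \<pi> t \<omega> = pseudo_outcome \<pi>' t \<omega>"
  shows "AE \<omega> in M. Qf \<pi> t (H t \<omega>) (A t \<omega>) = Qf \<pi>' t (H t \<omega>) (A t \<omega>)"
proof -
  have "AE \<omega> in M. Qf \<pi> t (H t \<omega>) (A t \<omega>) \<le> Qf \<pi>' t (H t \<omega>) (A t \<omega>)"
    by (rule Q_action_mono[OF \<pi> \<pi>' t]) (use eq in \<open>auto elim: eventually_mono\<close>)
  moreover have "AE \<omega> in M. Qf \<pi>' t (H t \<omega>) (A t \<omega>) \<le> Qf \<pi> t (H t \<omega>) (A t \<omega>)"
    by (rule Q_action_mono[OF \<pi>' \<pi> t]) (use eq in \<open>auto elim: eventually_mono\<close>)
  ultimately show ?thesis by eventually_elim auto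
qed

lemma integral_ipw_pseudo_outcome_action:
  fixes F :: "'s hist \<Rightarrow> real"
  assumes \<pi>: "tail_in_class \<pi>" and t: "t \<in> {1..T}" and \<rho>: "\<rho> \<in> Pcl t"
    and F[measurable]: "F \<in> borel_measurable (hist_space SM t)" and F_bound: "\<And>h. \<bar>F h\<bar> \<le> c"
  shows "(\<integral>\<omega>. F (H t \<omega>) * ipw t \<rho> (H t \<omega>) b * of_bool (A t \<omega> = b) * pseudo_outcome \<pi> t \<omega> \<partial>M) =
         (\<integral>\<omega>. F (H t \<omega>) * Qf \<pi> t (H t \<omega>) b * of_bool (\<rho> (H t \<omega>) = b) \<partial>M)"
proof -
  note [measurable] = Q_measurable[OF \<pi> t] ipw_measurable[OF t \<rho>]
  have "(\<integral>\<omega>. F (H t \<omega>) * ipw t \<rho> (H t \<omega>) b * of_bool (A t \<omega> = b) * pseudo_outcome \<pi> t \<omega> \<partial>M) =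
        (\<integral>\<omega>. F (H t \<omega>) * ipw t \<rho> (H t \<omega>) b * of_bool (A t \<omega> = b) * Qf \<pi> t (H t \<omega>) b \<partial>M)"
    by (rule integral_pseudo_outcome_eq_Q[OF \<pi> t _ abs_mult_ipw_le[OF F_bound]]) measurable
  also have "\<dots> = (\<integral>\<omega>. (F (H t \<omega>) * Qf \<pi> t (H t \<omega>) b) * ipw t \<rho> (H t \<omega>) b * of_bool (A t \<omega> = b) \<partial>M)"
    by (simp add: ac_simps)
  also have "\<dots> = (\<integral>\<omega>. F (H t \<omega>) * Qf \<pi> t (H t \<omega>) b * of_bool (\<rho> (H t \<omega>) = b) \<partial>M)"
    by (rule integral_ipw_action_eq_policy(2)[OF t \<rho>, where G="\<lambda>h. F h * Qf \<pi> t h b"]) measurable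
  finally show ?thesis .
qed

lemma integral_Q_policy_eq_ipw:
  fixes F :: "'s hist \<Rightarrow> real"
  assumes \<pi>: "tail_in_class \<pi>" and t: "t \<in> {1..T}" and \<rho>: "\<rho> \<in> Pcl t"
    and F[measurable]: "F \<in> borel_measurable (hist_space SM t)" and F_bound: "\<And>h. \<bar>F h\<bar> \<le> c"
  shows "(\<integral>\<omega>. F (H t \<omega>) * Qf \<pi> t (H t \<omega>) (\<rho> (H t \<omega>)) \<partial>M) =
         (\<integral>\<omega>. F (H t \<omega>) * ipw t \<rho> (H t \<omega>) (A t \<omega>) * pseudo_outcome \<pi> t \<omega> \<partial>M)"
proof -
  note [measurable] = H_measurable[OF t] A_measurable[OF t] Q_measurable[OF \<pi> t] ipw_measurable[OF t \<rho>]
  have [measurable]: "pseudo_outcome \<pi> t \<in> borel_measurable M"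
    using integrable_pseudo_outcome[OF \<pi> t] by (rule borel_measurable_integrable)
  have int_Q: "integrable M (\<lambda>\<omega>. F (H t \<omega>) * Qf \<pi> t (H t \<omega>) b * of_bool (\<rho> (H t \<omega>) = b))" for b
  proof -
    have "integrable M (\<lambda>\<omega>. F (H t \<omega>) * (Qf \<pi> t (H t \<omega>) b * of_bool (\<rho> (H t \<omega>) = b)))"
      by (rule integrable_bounded_mult[OF integrable_Q_policy_action[OF \<pi> t \<rho>] _ F_bound]) measurable
    then show ?thesis by (simp only: mult.assoc)
  qed
  have int_outcome: "integrable M (\<lambda>\<omega>. F (H t \<omega>) * ipw t \<rho> (H t \<omega>) b * of_bool (A t \<omega> = b) * pseudo_outcome \<pi> t \<omega>)"
    for b
  proof (rule integrable_bounded_mult[OF integrable_pseudo_outcome[OF \<pi> t], where c="c / \<eta>"])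
    fix \<omega>
    have bound: "\<bar>F (H t \<omega>) * ipw t \<rho> (H t \<omega>) b\<bar> \<le> c / \<eta>" by (rule abs_mult_ipw_le[OF F_bound])
    show "\<bar>F (H t \<omega>) * ipw t \<rho> (H t \<omega>) b * of_bool (A t \<omega> = b)\<bar> \<le> c / \<eta>"
      using bound order_trans[OF abs_ge_zero bound] by (cases "A t \<omega> = b") simp_all
  qed measurable
  have "(\<integral>\<omega>. F (H t \<omega>) * Qf \<pi> t (H t \<omega>) (\<rho> (H t \<omega>)) \<partial>M) =
        (\<integral>\<omega>. (\<Sum>b<d t. F (H t \<omega>) * Qf \<pi> t (H t \<omega>) b * of_bool (\<rho> (H t \<omega>) = b)) \<partial>M)"
    unfolding Q_policy_eq_sum[OF t \<rho>] sum_distrib_left by (simp only: mult.assoc)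
  also have "\<dots> = (\<Sum>b<d t. \<integral>\<omega>. F (H t \<omega>) * Qf \<pi> t (H t \<omega>) b * of_bool (\<rho> (H t \<omega>) = b) \<partial>M)"
    by (rule Bochner_Integration.integral_sum[OF int_Q])
  also have "\<dots> = (\<Sum>b<d t. \<integral>\<omega>. F (H t \<omega>) * ipw t \<rho> (H t \<omega>) b * of_bool (A t \<omega> = b) * pseudo_outcome \<pi> t \<omega> \<partial>M)"
    by (simp add: integral_ipw_pseudo_outcome_action[OF \<pi> t \<rho> F F_bound])
  also have "\<dots> = (\<integral>\<omega>. (\<Sum>b<d t. F (H t \<omega>) * ipw t \<rho> (H t \<omega>) b * of_bool (A t \<omega> = b) * pseudo_outcome \<pi> t \<omega>) \<partial>M)"
    by (rule Bochner_Integration.integral_sum[OF int_outcome, symmetric])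
  also have "\<dots> = (\<integral>\<omega>. F (H t \<omega>) * ipw t \<rho> (H t \<omega>) (A t \<omega>) * pseudo_outcome \<pi> t \<omega> \<partial>M)"
  proof (rule Bochner_Integration.integral_cong[OF refl])
    fix \<omega> assume "\<omega> \<in> space M"
    from sum_lessThan_of_bool_eq[OF A_range[OF t this],
        where f="\<lambda>b. F (H t \<omega>) * ipw t \<rho> (H t \<omega>) b * pseudo_outcome \<pi> t \<omega>"]
    show "(\<Sum>b<d t. F (H t \<omega>) * ipw t \<rho> (H t \<omega>) b * of_bool (A t \<omega> = b) * pseudo_outcome \<pi> t \<omega>) =
        F (H t \<omega>) * ipw t \<rho> (H t \<omega>) (A t \<omega>) * pseudo_outcome \<pi> t \<omega>"
      by (simp add: ac_simps)
  qed
  finally show ?thesis .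
qed

lemma H_eq_hist_trunc: "1 \<le> t \<Longrightarrow> H t \<omega> = hist_trunc t (H (Suc t) \<omega>)"
  by (auto simp: hist_trunc_def obs_hist_def pot_hist_def fun_eq_iff restrict_def take_obs_acts min_def)

lemma action_eq_nth_hist: "1 \<le> t \<Longrightarrow> A t \<omega> = fst (H (Suc t) \<omega>) ! (t - 1)"
  by (simp add: obs_hist_def pot_hist_def nth_obs_acts)

text \<open>The weight \<open>\<phi>(H t) * ipw(H t, A t)\<close>, written as a function of \<open>H (Suc t)\<close>.\<close>

definition ipw_lift :: "nat \<Rightarrow> ('s hist \<Rightarrow> nat) \<Rightarrow> ('s hist \<Rightarrow> real) \<Rightarrow> 's hist \<Rightarrow> real" where
  "ipw_lift t \<rho> \<phi> h = \<phi> (hist_trunc t h) * ipw t \<rho> (hist_trunc t h) (fst h ! (t - 1))"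

lemma ipw_lift_obs_hist:
  assumes "1 \<le> t"
  shows "ipw_lift t \<rho> \<phi> (H (Suc t) \<omega>) = \<phi> (H t \<omega>) * ipw t \<rho> (H t \<omega>) (A t \<omega>)"
  by (simp only: ipw_lift_def H_eq_hist_trunc[OF assms, symmetric] action_eq_nth_hist[OF assms, symmetric])

lemma ipw_lift_measurable:
  assumes t: "t \<in> {1..T}" and \<rho>: "\<rho> \<in> Pcl t" and \<phi>: "\<phi> \<in> borel_measurable (hist_space SM t)"
  shows "ipw_lift t \<rho> \<phi> \<in> borel_measurable (hist_space SM (Suc t))"
  unfolding ipw_lift_def
proof (rule borel_measurable_times)
  show "(\<lambda>h. \<phi> (hist_trunc t h)) \<in> borel_measurable (hist_space SM (Suc t))"
    by (rule measurable_compose[OF hist_trunc_measurable \<phi>])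
  show "(\<lambda>h. ipw t \<rho> (hist_trunc t h) (fst h ! (t - 1))) \<in> borel_measurable (hist_space SM (Suc t))"
    by (rule measurable_compose_countable'[where I=UNIV and f="\<lambda>i h. ipw t \<rho> (hist_trunc t h) i"])
       (auto intro: measurable_compose[OF hist_trunc_measurable ipw_measurable[OF t \<rho>]]
         hist_action_measurable)
qed

lemma ipw_lift_bounds:
  assumes "\<And>h. 0 \<le> \<phi> h \<and> \<phi> h \<le> c"
  shows "0 \<le> ipw_lift t \<rho> \<phi> h \<and> ipw_lift t \<rho> \<phi> h \<le> c / \<eta>"
proof -
  let ?h = "hist_trunc t h" and ?b = "fst h ! (t - 1)"
  have "\<phi> ?h * ipw t \<rho> ?h ?b \<le> c * (1 / \<eta>)"
    using assms[of ?h] by (intro mult_mono ipw_le ipw_nonneg) auto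
  then show ?thesis using assms[of ?h] ipw_nonneg[of t \<rho> ?h ?b] by (simp add: ipw_lift_def)
qed

section \<open>Identification of policy values\<close>

definition value_term :: "(nat \<Rightarrow> 's hist \<Rightarrow> nat) \<Rightarrow> nat \<Rightarrow> nat \<Rightarrow> nat list \<Rightarrow> 'w \<Rightarrow> real" where
  "value_term \<pi> t s a \<omega> = Y s a \<omega> * of_bool (obs_acts A (t - 1) \<omega> = take (t - 1) a) *
     (\<Prod>l\<in>{t..s}. of_bool (\<pi> l (pot_hist S l (take (l - 1) a) \<omega>) = a ! (l - 1)))"

definition value_integrand :: "(nat \<Rightarrow> 's hist \<Rightarrow> nat) \<Rightarrow> nat \<Rightarrow> 'w \<Rightarrow> real" where
  "value_integrand \<pi> t \<omega> = (\<Sum>s\<in>{t..T}. \<Sum>a\<in>act_seqs d s. value_term \<pi> t s a \<omega>)"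

lemma policy_value_eq_integral: "policy_value M T d S A Y t \<pi> = (\<integral>\<omega>. value_integrand \<pi> t \<omega> \<partial>M)"
  unfolding policy_value_def value_integrand_def value_term_def ..

lemma welfare_eq_policy_value: "welfare M T d S Y \<pi> = policy_value M T d S A Y 1 \<pi>"
  unfolding welfare_def policy_value_def by (simp add: obs_acts_def)

lemma policy_value_cong:
  assumes "\<And>l. l \<in> {t..T} \<Longrightarrow> \<pi> l = \<pi>' l"
  shows "policy_value M T d S A Y t \<pi> = policy_value M T d S A Y t \<pi>'"
  unfolding policy_value_eq_integral value_integrand_def value_term_def
  by (intro Bochner_Integration.integral_cong sum.cong arg_cong2[where f="(*)"] prod.cong refl)
     (use assms in auto)

text \<open>A potential history at a stage \<open>l \<ge> t\<close> along \<open>a\<close>, assembled from a stage-\<open>t\<close> history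
  (states up to \<open>t\<close>) and a point of \<^const>\<open>future_space\<close> (states after \<open>t\<close>). It exhibits
  \<^const>\<open>value_term\<close> as a function of \<open>H t\<close> and \<^const>\<open>future\<close>, to which sequential
  ignorability applies.\<close>

definition spliced_hist :: "nat \<Rightarrow> nat list \<Rightarrow> nat \<Rightarrow> 's hist \<times> ((nat \<Rightarrow> real) \<times> (nat \<Rightarrow> 's)) \<Rightarrow> 's hist" where
  "spliced_hist t a l x = (take (l - 1) a, restrict (\<lambda>j. if j \<le> t then snd (fst x) j else snd (snd x) j) {1..l})"

definition value_kernel ::
  "(nat \<Rightarrow> 's hist \<Rightarrow> nat) \<Rightarrow> nat \<Rightarrow> nat \<Rightarrow> nat list \<Rightarrow> 's hist \<times> ((nat \<Rightarrow> real) \<times> (nat \<Rightarrow> 's)) \<Rightarrow> real" where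
  "value_kernel \<pi> t s a x = fst (snd x) s * of_bool (fst (fst x) = take (t - 1) a) *
     (\<Prod>l\<in>{t..s}. of_bool (\<pi> l (spliced_hist t a l x) = a ! (l - 1)))"

lemma spliced_hist_measurable:
  assumes l: "l \<le> T"
  shows "spliced_hist t a l \<in> measurable (hist_space SM t \<Otimes>\<^sub>M future_space t) (hist_space SM l)"
  unfolding spliced_hist_def hist_space_def
proof (intro measurable_Pair measurable_restrict)
  fix j assume j: "j \<in> {1..l}"
  show "(\<lambda>x. if j \<le> t then snd (fst x) j else snd (snd x) j)
      \<in> (count_space UNIV \<Otimes>\<^sub>M Pi\<^sub>M {1..t} (\<lambda>s. SM)) \<Otimes>\<^sub>M future_space t \<rightarrow>\<^sub>M SM"
  proof (cases "j \<le> t")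
    case True
    have "(\<lambda>x. snd (fst x) j) \<in> (count_space UNIV \<Otimes>\<^sub>M Pi\<^sub>M {1..t} (\<lambda>s. SM)) \<Otimes>\<^sub>M future_space t \<rightarrow>\<^sub>M SM"
      by (rule measurable_compose[OF measurable_fst], rule measurable_compose[OF measurable_snd],
          rule measurable_component_singleton) (use j True in auto)
    then show ?thesis using True by simp
  next
    case False
    have "(\<lambda>x. snd (snd x) j) \<in> (count_space UNIV \<Otimes>\<^sub>M Pi\<^sub>M {1..t} (\<lambda>s. SM)) \<Otimes>\<^sub>M future_space t \<rightarrow>\<^sub>M SM"
      unfolding future_space_def
      by (rule measurable_compose[OF measurable_snd], rule measurable_compose[OF measurable_snd],
          rule measurable_component_singleton) (use j l False in auto)
    then show ?thesis using False by simp
  qed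
qed simp

lemma value_kernel_measurable:
  assumes \<pi>: "\<pi> \<in> policy_class T Pcl" and t: "t \<in> {1..T}" and s: "s \<in> {t..T}"
  shows "value_kernel \<pi> t s a \<in> borel_measurable (hist_space SM t \<Otimes>\<^sub>M future_space t)"
  unfolding value_kernel_def
proof (intro borel_measurable_times borel_measurable_prod)
  show "(\<lambda>x. fst (snd x) s) \<in> borel_measurable (hist_space SM t \<Otimes>\<^sub>M future_space t)"
    unfolding future_space_def using s
    by (intro measurable_compose[OF measurable_snd] measurable_compose[OF measurable_fst]
        measurable_component_singleton) auto
  have "(\<lambda>x. fst (fst x)) \<in> measurable (hist_space SM t \<Otimes>\<^sub>M future_space t) (count_space UNIV)"
    unfolding hist_space_def by (intro measurable_compose[OF measurable_fst] measurable_fst)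
  then show "(\<lambda>x. of_bool (fst (fst x) = take (t - 1) a) :: real) \<in> borel_measurable (hist_space SM t \<Otimes>\<^sub>M future_space t)"
    by measurable
  fix l assume l: "l \<in> {t..s}"
  then have "\<pi> l \<in> measurable (hist_space SM l) (count_space UNIV)"
    using class_measurable policy_class_in[OF \<pi>] t s by auto
  then have "(\<lambda>x. \<pi> l (spliced_hist t a l x)) \<in> measurable (hist_space SM t \<Otimes>\<^sub>M future_space t) (count_space UNIV)"
    using spliced_hist_measurable[of l t a] l s by (auto intro: measurable_compose)
  then show "(\<lambda>x. of_bool (\<pi> l (spliced_hist t a l x) = a ! (l - 1)) :: real)
      \<in> borel_measurable (hist_space SM t \<Otimes>\<^sub>M future_space t)"
    by measurable
qed

lemma spliced_hist_obs:
  assumes s: "s \<le> T" and a': "take s a' = a" and l: "l \<in> {t..s}"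
    and obs: "obs_acts A (t - 1) \<omega> = take (t - 1) a"
  shows "spliced_hist t a l (H t \<omega>, future t a' \<omega>) = pot_hist S l (take (l - 1) a) \<omega>"
proof -
  have splice: "(if j \<le> t then snd (H t \<omega>) j else snd (future t a' \<omega>) j) = S j (take (j - 1) a) \<omega>"
    if j: "j \<in> {1..l}" for j
  proof (cases "j \<le> t")
    case True
    then show ?thesis using j obs by (simp add: obs_hist_def pot_hist_def min_def)
  next
    case False
    have "take (j - 1) a' = take (j - 1) a" using j l a' False by (auto simp: min_def)
    then show ?thesis using False j l s by (simp add: future_def)
  qed
  have "pot_hist S l (take (l - 1) a) \<omega> = (take (l - 1) a, restrict (\<lambda>j. S j (take (j - 1) a) \<omega>) {1..l})"
    by (auto simp: pot_hist_def fun_eq_iff restrict_def min_def)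
  moreover have "restrict (\<lambda>j. if j \<le> t then snd (H t \<omega>) j else snd (future t a' \<omega>) j) {1..l} =
      restrict (\<lambda>j. S j (take (j - 1) a) \<omega>) {1..l}"
    by (rule restrict_ext) (rule splice)
  ultimately show ?thesis unfolding spliced_hist_def fst_conv snd_conv by simp
qed

lemma value_term_eq_kernel:
  assumes s: "s \<in> {t..T}" and a: "a \<in> act_seqs d s" and a': "take s a' = a"
  shows "value_term \<pi> t s a \<omega> = value_kernel \<pi> t s a (H t \<omega>, future t a' \<omega>)"
proof (cases "obs_acts A (t - 1) \<omega> = take (t - 1) a")
  case False
  then show ?thesis by (simp add: value_term_def value_kernel_def obs_hist_def pot_hist_def)
next
  case True
  have "fst (future t a' \<omega>) s = Y s a \<omega>" using s a' by (simp add: future_def)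
  moreover have "(\<Prod>l\<in>{t..s}. of_bool (\<pi> l (spliced_hist t a l (H t \<omega>, future t a' \<omega>)) = a ! (l - 1)) :: real)
     = (\<Prod>l\<in>{t..s}. of_bool (\<pi> l (pot_hist S l (take (l - 1) a) \<omega>) = a ! (l - 1)))"
    using spliced_hist_obs[OF _ a' _ True] s by (intro prod.cong) auto
  ultimately show ?thesis
    using True by (simp add: value_term_def value_kernel_def obs_hist_def pot_hist_def)
qed

lemma value_term_measurable:
  assumes \<pi>: "\<pi> \<in> policy_class T Pcl" and t: "t \<in> {1..T}" and s: "s \<in> {t..T}" and a: "a \<in> act_seqs d s"
  shows "value_term \<pi> t s a \<in> borel_measurable M"
proof -
  obtain a' where a': "a' \<in> act_seqs d T" "take s a' = a" using extend_act_seq[OF a] s by auto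
  have "(\<lambda>\<omega>. value_kernel \<pi> t s a (H t \<omega>, future t a' \<omega>)) \<in> borel_measurable M"
    using value_kernel_measurable[OF \<pi> t s] H_measurable[OF t] future_measurable[OF t a'(1)]
    by measurable
  then show ?thesis
    by (rule measurable_cong[THEN iffD1, rotated]) (simp add: value_term_eq_kernel[OF s a a'(2)])
qed

lemma integrable_value_term:
  assumes \<pi>: "\<pi> \<in> policy_class T Pcl" and t: "t \<in> {1..T}" and s: "s \<in> {t..T}" and a: "a \<in> act_seqs d s"
  shows "integrable M (value_term \<pi> t s a)"
proof (rule Bochner_Integration.integrable_bound[OF Y_int[of s a] value_term_measurable[OF assms]])
  show "s \<in> {1..T}" using s t by auto
  have "\<bar>(\<Prod>l\<in>{t..s}. of_bool (\<pi> l (pot_hist S l (take (l - 1) a) \<omega>) = a ! (l - 1)) :: real)\<bar> \<le> 1" for \<omega>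
    by (subst abs_prod) (intro prod_le_1, auto)
  then show "AE \<omega> in M. norm (value_term \<pi> t s a \<omega>) \<le> norm (Y s a \<omega>)"
    by (auto simp: value_term_def abs_mult intro!: mult_left_le)
qed (rule a)

lemma value_term_nonzero:
  assumes "value_term \<pi> t s a \<omega> \<noteq> 0" and "t \<le> s"
  shows "obs_acts A (t - 1) \<omega> = take (t - 1) a" and "\<pi> t (H t \<omega>) = a ! (t - 1)"
proof -
  show obs: "obs_acts A (t - 1) \<omega> = take (t - 1) a" using assms(1) by (auto simp: value_term_def)
  have "\<pi> t (pot_hist S t (take (t - 1) a) \<omega>) = a ! (t - 1)"
    using assms by (auto simp: value_term_def prod_zero_iff)
  then show "\<pi> t (H t \<omega>) = a ! (t - 1)" using obs by (simp add: obs_hist_def)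
qed

text \<open>This is where sequential ignorability enters.\<close>

lemma integral_value_term_ipw:
  fixes \<phi> :: "'s hist \<Rightarrow> real"
  assumes \<pi>: "\<pi> \<in> policy_class T Pcl" and t: "t \<in> {1..T}" and s: "s \<in> {t..T}" and a: "a \<in> act_seqs d s"
    and \<phi>[measurable]: "\<phi> \<in> borel_measurable (hist_space SM t)"
  defines "b \<equiv> a ! (t - 1)"
  shows "(\<integral>\<omega>. \<phi> (H t \<omega>) * value_term \<pi> t s a \<omega> \<partial>M) =
         (\<integral>\<omega>. \<phi> (H t \<omega>) * ipw t (\<pi> t) (H t \<omega>) b * of_bool (A t \<omega> = b) * value_term \<pi> t s a \<omega> \<partial>M)"
proof -
  obtain a' where a': "a' \<in> act_seqs d T" "take s a' = a" using extend_act_seq[OF a] s by auto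
  have \<rho>: "\<pi> t \<in> Pcl t" by (rule policy_class_in[OF \<pi> t])
  note [measurable] = H_measurable[OF t] ipw_measurable[OF t \<rho>] future_measurable[OF t a'(1)]
    value_kernel_measurable[OF \<pi> t s] propensity_measurable[OF t] value_term_measurable[OF \<pi> t s a]
  define K where "K x = \<phi> (fst x) * ipw t (\<pi> t) (fst x) b * value_kernel \<pi> t s a x" for x
  have K[measurable]: "K \<in> borel_measurable (hist_space SM t \<Otimes>\<^sub>M future_space t)" unfolding K_def by measurable
  have K_obs: "K (H t \<omega>, future t a' \<omega>) = \<phi> (H t \<omega>) * ipw t (\<pi> t) (H t \<omega>) b * value_term \<pi> t s a \<omega>" for \<omega>
    by (simp add: K_def value_term_eq_kernel[OF s a a'(2)])
  have "(\<integral>\<omega>. \<phi> (H t \<omega>) * ipw t (\<pi> t) (H t \<omega>) b * of_bool (A t \<omega> = b) * value_term \<pi> t s a \<omega> \<partial>M)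
      = (\<integral>\<omega>. K (H t \<omega>, future t a' \<omega>) * of_bool (A t \<omega> = b) \<partial>M)"
    by (simp add: K_obs ac_simps)
  also have "\<dots> = (\<integral>\<omega>. K (H t \<omega>, future t a' \<omega>) * e t (H t \<omega>) b \<partial>M)"
    by (rule integral_future_action_eq_propensity[OF t a'(1) K])
  also have "\<dots> = (\<integral>\<omega>. \<phi> (H t \<omega>) * value_term \<pi> t s a \<omega> \<partial>M)"
  proof (rule integral_cong_AE)
    show "AE \<omega> in M. K (H t \<omega>, future t a' \<omega>) * e t (H t \<omega>) b = \<phi> (H t \<omega>) * value_term \<pi> t s a \<omega>"
      using overlap_policy[OF t \<rho>]
    proof eventually_elim
      case (elim \<omega>)
      show ?case
      proof (cases "value_term \<pi> t s a \<omega> = 0")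
        case False
        then have "\<pi> t (H t \<omega>) = b" using value_term_nonzero(2) s by (simp add: b_def)
        then have "ipw t (\<pi> t) (H t \<omega>) b * e t (H t \<omega>) b = 1"
          using elim eta by (simp add: ipw_def)
        then show ?thesis by (simp add: K_obs)
      qed (simp add: K_obs)
    qed
  qed measurable
  finally show ?thesis ..
qed

lemma ipw_value_term_shift:
  assumes t: "1 \<le> t" and s: "t \<le> s" and a: "a \<in> act_seqs d s"
  shows "ipw t (\<pi> t) (H t \<omega>) (a ! (t - 1)) * of_bool (A t \<omega> = a ! (t - 1)) * value_term \<pi> t s a \<omega> =
    ipw t (\<pi> t) (H t \<omega>) (A t \<omega>) * value_term \<pi> (Suc t) s a \<omega>"
proof -
  have len: "length a = s" using a by (simp add: act_seqs_def)
  have stages: "{t..s} = insert t {Suc t..s}" using s by auto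
  have "obs_acts A t \<omega> = obs_acts A (t - 1) \<omega> @ [A t \<omega>]"
    using obs_acts_Suc[of "t - 1"] t by simp
  moreover have "take t a = take (t - 1) a @ [a ! (t - 1)]"
    using take_Suc_conv_app_nth[of "t - 1" a] t s len by simp
  ultimately have obs: "(obs_acts A t \<omega> = take t a) \<longleftrightarrow>
      (obs_acts A (t - 1) \<omega> = take (t - 1) a \<and> A t \<omega> = a ! (t - 1))"
    by simp
  have "ipw t (\<pi> t) (H t \<omega>) (A t \<omega>) * of_bool (\<pi> t (H t \<omega>) = A t \<omega>) = ipw t (\<pi> t) (H t \<omega>) (A t \<omega>)"
    by (simp add: ipw_def)
  moreover have "pot_hist S t (take (t - 1) a) \<omega> = H t \<omega>" if "obs_acts A (t - 1) \<omega> = take (t - 1) a"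
    using that by (simp add: obs_hist_def)
  ultimately show ?thesis
    using t by (auto simp: value_term_def stages obs ac_simps)
qed

lemma integral_value_term_shift:
  fixes \<phi> :: "'s hist \<Rightarrow> real"
  assumes \<pi>: "\<pi> \<in> policy_class T Pcl" and t: "t \<in> {1..T}" and s: "s \<in> {t..T}" and a: "a \<in> act_seqs d s"
    and \<phi>[measurable]: "\<phi> \<in> borel_measurable (hist_space SM t)" and \<phi>_bound: "\<And>h. \<bar>\<phi> h\<bar> \<le> c"
  shows "integrable M (\<lambda>\<omega>. \<phi> (H t \<omega>) * ipw t (\<pi> t) (H t \<omega>) (A t \<omega>) * value_term \<pi> (Suc t) s a \<omega>)"
    and "(\<integral>\<omega>. \<phi> (H t \<omega>) * value_term \<pi> t s a \<omega> \<partial>M) =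
         (\<integral>\<omega>. \<phi> (H t \<omega>) * ipw t (\<pi> t) (H t \<omega>) (A t \<omega>) * value_term \<pi> (Suc t) s a \<omega> \<partial>M)"
proof -
  have \<rho>: "\<pi> t \<in> Pcl t" by (rule policy_class_in[OF \<pi> t])
  note [measurable] = H_measurable[OF t] A_measurable[OF t] ipw_measurable[OF t \<rho>]
  let ?b = "a ! (t - 1)"
  have shift: "\<phi> (H t \<omega>) * ipw t (\<pi> t) (H t \<omega>) (A t \<omega>) * value_term \<pi> (Suc t) s a \<omega> =
      (\<phi> (H t \<omega>) * ipw t (\<pi> t) (H t \<omega>) ?b * of_bool (A t \<omega> = ?b)) * value_term \<pi> t s a \<omega>" for \<omega>
    using ipw_value_term_shift[of t s a \<pi> \<omega>] t s a by (simp add: ac_simps)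
  have "integrable M (\<lambda>\<omega>. (\<phi> (H t \<omega>) * ipw t (\<pi> t) (H t \<omega>) ?b * of_bool (A t \<omega> = ?b)) * value_term \<pi> t s a \<omega>)"
  proof (rule integrable_bounded_mult[OF integrable_value_term[OF \<pi> t s a], where c="c / \<eta>"])
    fix \<omega>
    have bound: "\<bar>\<phi> (H t \<omega>) * ipw t (\<pi> t) (H t \<omega>) ?b\<bar> \<le> c / \<eta>" by (rule abs_mult_ipw_le[OF \<phi>_bound])
    show "\<bar>\<phi> (H t \<omega>) * ipw t (\<pi> t) (H t \<omega>) ?b * of_bool (A t \<omega> = ?b)\<bar> \<le> c / \<eta>"
      using bound order_trans[OF abs_ge_zero bound] by (cases "A t \<omega> = ?b") simp_all
  qed measurable
  then show "integrable M (\<lambda>\<omega>. \<phi> (H t \<omega>) * ipw t (\<pi> t) (H t \<omega>) (A t \<omega>) * value_term \<pi> (Suc t) s a \<omega>)"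
    by (simp only: shift)
  show "(\<integral>\<omega>. \<phi> (H t \<omega>) * value_term \<pi> t s a \<omega> \<partial>M) =
        (\<integral>\<omega>. \<phi> (H t \<omega>) * ipw t (\<pi> t) (H t \<omega>) (A t \<omega>) * value_term \<pi> (Suc t) s a \<omega> \<partial>M)"
    unfolding shift by (rule integral_value_term_ipw[OF \<pi> t s a \<phi>])
qed

lemma sum_value_term_Suc:
  assumes t: "t \<in> {1..T}" and \<omega>: "\<omega> \<in> space M"
  shows "(\<Sum>s\<in>{t..T}. \<Sum>a\<in>act_seqs d s. value_term \<pi> (Suc t) s a \<omega>) =
         Y t (obs_acts A t \<omega>) \<omega> + value_integrand \<pi> (Suc t) \<omega>"
proof -
  have "(\<Sum>a\<in>act_seqs d t. value_term \<pi> (Suc t) t a \<omega>) =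
      (\<Sum>a\<in>act_seqs d t. if obs_acts A t \<omega> = a then Y t a \<omega> else 0)"
    by (intro sum.cong) (auto simp: value_term_def act_seqs_def)
  also have "\<dots> = Y t (obs_acts A t \<omega>) \<omega>"
    using obs_acts_in_act_seqs[of t \<omega>] \<omega> t by (subst sum.delta') (auto simp: finite_act_seqs)
  finally show ?thesis
    using t by (simp add: value_integrand_def sum.atLeast_Suc_atMost)
qed

lemma integral_value_integrand_shift:
  fixes \<phi> :: "'s hist \<Rightarrow> real"
  assumes \<pi>: "\<pi> \<in> policy_class T Pcl" and t: "t \<in> {1..T}"
    and \<phi>: "\<phi> \<in> borel_measurable (hist_space SM t)" and \<phi>_bound: "\<And>h. \<bar>\<phi> h\<bar> \<le> c"
  defines "\<psi> \<equiv> \<lambda>\<omega>. \<phi> (H t \<omega>) * ipw t (\<pi> t) (H t \<omega>) (A t \<omega>)"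
  shows "integrable M (\<lambda>\<omega>. \<psi> \<omega> * value_integrand \<pi> (Suc t) \<omega>)"
    and "(\<integral>\<omega>. \<phi> (H t \<omega>) * value_integrand \<pi> t \<omega> \<partial>M) =
         (\<integral>\<omega>. \<psi> \<omega> * (Y t (obs_acts A t \<omega>) \<omega> + value_integrand \<pi> (Suc t) \<omega>) \<partial>M)"
proof -
  note shift = integral_value_term_shift[OF \<pi> t _ _ \<phi> \<phi>_bound]
  have int_step: "integrable M (\<lambda>\<omega>. \<phi> (H t \<omega>) * value_term \<pi> t s a \<omega>)"
    if "s \<in> {t..T}" "a \<in> act_seqs d s" for s a
    by (rule integrable_bounded_mult[OF integrable_value_term[OF \<pi> t that] _ \<phi>_bound])
       (use \<phi> H_measurable[OF t] in measurable)
  show "integrable M (\<lambda>\<omega>. \<psi> \<omega> * value_integrand \<pi> (Suc t) \<omega>)"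
    using shift(1) t
    by (auto simp: \<psi>_def value_integrand_def sum_distrib_left intro!: Bochner_Integration.integrable_sum)
  have "(\<integral>\<omega>. \<phi> (H t \<omega>) * value_integrand \<pi> t \<omega> \<partial>M) =
      (\<Sum>s\<in>{t..T}. \<Sum>a\<in>act_seqs d s. \<integral>\<omega>. \<phi> (H t \<omega>) * value_term \<pi> t s a \<omega> \<partial>M)"
    unfolding value_integrand_def sum_distrib_left
    by (simp add: int_step Bochner_Integration.integrable_sum)
  also have "\<dots> = (\<Sum>s\<in>{t..T}. \<Sum>a\<in>act_seqs d s. \<integral>\<omega>. \<psi> \<omega> * value_term \<pi> (Suc t) s a \<omega> \<partial>M)"
    by (intro sum.cong refl) (simp add: shift(2) \<psi>_def)
  also have "\<dots> = (\<integral>\<omega>. \<psi> \<omega> * (\<Sum>s\<in>{t..T}. \<Sum>a\<in>act_seqs d s. value_term \<pi> (Suc t) s a \<omega>) \<partial>M)"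
    unfolding sum_distrib_left
    using shift(1) by (simp add: \<psi>_def mult.assoc Bochner_Integration.integrable_sum)
  also have "\<dots> = (\<integral>\<omega>. \<psi> \<omega> * (Y t (obs_acts A t \<omega>) \<omega> + value_integrand \<pi> (Suc t) \<omega>) \<partial>M)"
    by (intro Bochner_Integration.integral_cong refl) (simp add: sum_value_term_Suc[OF t])
  finally show "(\<integral>\<omega>. \<phi> (H t \<omega>) * value_integrand \<pi> t \<omega> \<partial>M) =
      (\<integral>\<omega>. \<psi> \<omega> * (Y t (obs_acts A t \<omega>) \<omega> + value_integrand \<pi> (Suc t) \<omega>) \<partial>M)" .
qed

lemma integral_value_integrand_eq_Qpi_step:
  fixes \<phi> :: "'s hist \<Rightarrow> real"
  assumes \<pi>: "\<pi> \<in> policy_class T Pcl" and t: "t \<in> {1..T}"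
    and \<phi>[measurable]: "\<phi> \<in> borel_measurable (hist_space SM t)" and \<phi>_bound: "\<And>h. 0 \<le> \<phi> h \<and> \<phi> h \<le> c"
    and IH: "t < T \<Longrightarrow> (\<integral>\<omega>. ipw_lift t (\<pi> t) \<phi> (H (Suc t) \<omega>) * value_integrand \<pi> (Suc t) \<omega> \<partial>M)
                     = (\<integral>\<omega>. ipw_lift t (\<pi> t) \<phi> (H (Suc t) \<omega>) * Qpi \<pi> (Suc t) \<omega> \<partial>M)"
  shows "(\<integral>\<omega>. \<phi> (H t \<omega>) * value_integrand \<pi> t \<omega> \<partial>M) = (\<integral>\<omega>. \<phi> (H t \<omega>) * Qpi \<pi> t \<omega> \<partial>M)"
proof -
  have \<rho>: "\<pi> t \<in> Pcl t" by (rule policy_class_in[OF \<pi> t])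
  have tail: "tail_in_class \<pi>" by (rule policy_class_tail_in_class[OF \<pi>])
  have abs_bound: "\<bar>\<phi> h\<bar> \<le> c" for h using \<phi>_bound[of h] by auto
  define \<psi> where "\<psi> \<omega> = \<phi> (H t \<omega>) * ipw t (\<pi> t) (H t \<omega>) (A t \<omega>)" for \<omega>
  have [measurable]: "\<psi> \<in> borel_measurable M"
    unfolding \<psi>_def using ipw_obs_measurable[OF t \<rho>] H_measurable[OF t] by measurable
  have \<psi>_bound: "\<bar>\<psi> \<omega>\<bar> \<le> c / \<eta>" for \<omega> unfolding \<psi>_def by (rule abs_mult_ipw_le[OF abs_bound])
  have int_value: "integrable M (\<lambda>\<omega>. \<psi> \<omega> * value_integrand \<pi> (Suc t) \<omega>)"
    using integral_value_integrand_shift(1)[OF \<pi> t \<phi> abs_bound] by (simp add: \<psi>_def)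
  have int_outcome: "integrable M (\<lambda>\<omega>. \<psi> \<omega> * pseudo_outcome \<pi> t \<omega>)"
    by (rule integrable_bounded_mult[OF integrable_pseudo_outcome[OF tail t] _ \<psi>_bound]) measurable
  have "(\<integral>\<omega>. \<psi> \<omega> * (Y t (obs_acts A t \<omega>) \<omega> + value_integrand \<pi> (Suc t) \<omega>) \<partial>M) =
      (\<integral>\<omega>. \<psi> \<omega> * pseudo_outcome \<pi> t \<omega> \<partial>M)"
  proof (cases "t < T")
    case True
    have st: "Suc t \<in> {1..T}" using True t by auto
    have int_Q: "integrable M (\<lambda>\<omega>. \<psi> \<omega> * Qpi \<pi> (Suc t) \<omega>)"
      by (rule integrable_bounded_mult[OF integrable_Q_policy[OF tail st policy_class_in[OF \<pi> st]] _ \<psi>_bound])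
         measurable
    have IH': "(\<integral>\<omega>. \<psi> \<omega> * value_integrand \<pi> (Suc t) \<omega> \<partial>M) = (\<integral>\<omega>. \<psi> \<omega> * Qpi \<pi> (Suc t) \<omega> \<partial>M)"
      using IH[OF True] t by (simp add: ipw_lift_obs_hist \<psi>_def)
    have "\<psi> \<omega> * (Y t (obs_acts A t \<omega>) \<omega> + value_integrand \<pi> (Suc t) \<omega>) =
        \<psi> \<omega> * pseudo_outcome \<pi> t \<omega> + (\<psi> \<omega> * value_integrand \<pi> (Suc t) \<omega> - \<psi> \<omega> * Qpi \<pi> (Suc t) \<omega>)" for \<omega>
      by (simp add: pseudo_outcome_less[OF True] algebra_simps)
    then show ?thesis using int_outcome int_value int_Q IH' by simp
  next
    case False
    then have "t = T" using t by auto
    then show ?thesis by (simp add: value_integrand_def pseudo_outcome_last)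
  qed
  also have "\<dots> = (\<integral>\<omega>. \<phi> (H t \<omega>) * Qpi \<pi> t \<omega> \<partial>M)"
    using integral_Q_policy_eq_ipw[OF tail t \<rho> \<phi> abs_bound] by (simp add: \<psi>_def)
  finally show ?thesis
    using integral_value_integrand_shift(2)[OF \<pi> t \<phi> abs_bound] by (simp add: \<psi>_def)
qed

lemma integral_value_integrand_eq_Qpi:
  fixes \<phi> :: "'s hist \<Rightarrow> real"
  assumes \<pi>: "\<pi> \<in> policy_class T Pcl" and t: "t \<in> {1..T}"
    and "\<phi> \<in> borel_measurable (hist_space SM t)" and "\<And>h. 0 \<le> \<phi> h \<and> \<phi> h \<le> c"
  shows "(\<integral>\<omega>. \<phi> (H t \<omega>) * value_integrand \<pi> t \<omega> \<partial>M) = (\<integral>\<omega>. \<phi> (H t \<omega>) * Qpi \<pi> t \<omega> \<partial>M)"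
proof -
  from t have "t \<le> T" by simp
  then show ?thesis using t assms(3,4)
  proof (induction t arbitrary: \<phi> c rule: inc_induct)
    case base
    show ?case by (rule integral_value_integrand_eq_Qpi_step[OF \<pi> base.prems]) simp
  next
    case (step n)
    show ?case
    proof (rule integral_value_integrand_eq_Qpi_step[OF \<pi> step.prems])
      have "Suc n \<in> {1..T}" using step by auto
      moreover have "ipw_lift n (\<pi> n) \<phi> \<in> borel_measurable (hist_space SM (Suc n))"
        by (rule ipw_lift_measurable[OF step.prems(1) policy_class_in[OF \<pi> step.prems(1)] step.prems(2)])
      moreover have "\<And>h. 0 \<le> ipw_lift n (\<pi> n) \<phi> h \<and> ipw_lift n (\<pi> n) \<phi> h \<le> c / \<eta>"
        by (rule ipw_lift_bounds[OF step.prems(3)])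
      ultimately show "(\<integral>\<omega>. ipw_lift n (\<pi> n) \<phi> (H (Suc n) \<omega>) * value_integrand \<pi> (Suc n) \<omega> \<partial>M) =
          (\<integral>\<omega>. ipw_lift n (\<pi> n) \<phi> (H (Suc n) \<omega>) * Qpi \<pi> (Suc n) \<omega> \<partial>M)"
        by (rule step.IH)
    qed
  qed
qed

lemma policy_value_eq_integral_Qpi:
  assumes "\<pi> \<in> policy_class T Pcl" and "t \<in> {1..T}"
  shows "policy_value M T d S A Y t \<pi> = (\<integral>\<omega>. Qpi \<pi> t \<omega> \<partial>M)"
  using integral_value_integrand_eq_Qpi[OF assms, of "\<lambda>_. 1" 1] by (simp add: policy_value_eq_integral)

lemma integral_weighted_Qpi_diff:
  fixes \<phi> :: "'s hist \<Rightarrow> real"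
  assumes \<pi>: "\<pi> \<in> policy_class T Pcl" and \<pi>': "\<pi>' \<in> policy_class T Pcl" and t: "t \<in> {1..T}"
    and same: "\<pi> t = \<pi>' t"
    and \<phi>[measurable]: "\<phi> \<in> borel_measurable (hist_space SM t)" and \<phi>_bound: "\<And>h. \<bar>\<phi> h\<bar> \<le> c"
  defines "\<phi>' \<equiv> ipw_lift t (\<pi> t) \<phi>"
  shows "(\<integral>\<omega>. \<phi> (H t \<omega>) * Qpi \<pi> t \<omega> \<partial>M) - (\<integral>\<omega>. \<phi> (H t \<omega>) * Qpi \<pi>' t \<omega> \<partial>M) =
    (if t < T then (\<integral>\<omega>. \<phi>' (H (Suc t) \<omega>) * Qpi \<pi> (Suc t) \<omega> \<partial>M) - (\<integral>\<omega>. \<phi>' (H (Suc t) \<omega>) * Qpi \<pi>' (Suc t) \<omega> \<partial>M)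
     else 0)"
proof -
  have \<rho>: "\<pi> t \<in> Pcl t" by (rule policy_class_in[OF \<pi> t])
  note [measurable] = H_measurable[OF t]
  define \<psi> where "\<psi> \<omega> = \<phi> (H t \<omega>) * ipw t (\<pi> t) (H t \<omega>) (A t \<omega>)" for \<omega>
  have [measurable]: "\<psi> \<in> borel_measurable M"
    unfolding \<psi>_def using ipw_obs_measurable[OF t \<rho>] by measurable
  have \<psi>_bound: "\<bar>\<psi> \<omega>\<bar> \<le> c / \<eta>" for \<omega> unfolding \<psi>_def by (rule abs_mult_ipw_le[OF \<phi>_bound])
  have \<psi>_eq: "\<phi>' (H (Suc t) \<omega>) = \<psi> \<omega>" for \<omega>
    using t by (simp add: \<phi>'_def \<psi>_def ipw_lift_obs_hist)
  have ipw_repr: "(\<integral>\<omega>. \<phi> (H t \<omega>) * Qpi \<sigma> t \<omega> \<partial>M) = (\<integral>\<omega>. \<psi> \<omega> * pseudo_outcome \<sigma> t \<omega> \<partial>M)"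
    and int_outcome: "integrable M (\<lambda>\<omega>. \<psi> \<omega> * pseudo_outcome \<sigma> t \<omega>)"
    if \<sigma>: "\<sigma> \<in> {\<pi>, \<pi>'}" for \<sigma>
  proof -
    have tail: "tail_in_class \<sigma>" and \<sigma>_t: "\<sigma> t = \<pi> t"
      using \<sigma> same policy_class_tail_in_class[OF \<pi>] policy_class_tail_in_class[OF \<pi>'] by auto
    show "(\<integral>\<omega>. \<phi> (H t \<omega>) * Qpi \<sigma> t \<omega> \<partial>M) = (\<integral>\<omega>. \<psi> \<omega> * pseudo_outcome \<sigma> t \<omega> \<partial>M)"
      using integral_Q_policy_eq_ipw[OF tail t \<rho> \<phi> \<phi>_bound] by (simp add: \<psi>_def \<sigma>_t)
    show "integrable M (\<lambda>\<omega>. \<psi> \<omega> * pseudo_outcome \<sigma> t \<omega>)"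
      by (rule integrable_bounded_mult[OF integrable_pseudo_outcome[OF tail t] _ \<psi>_bound]) measurable
  qed
  have "(\<integral>\<omega>. \<phi> (H t \<omega>) * Qpi \<pi> t \<omega> \<partial>M) - (\<integral>\<omega>. \<phi> (H t \<omega>) * Qpi \<pi>' t \<omega> \<partial>M) =
      (\<integral>\<omega>. \<psi> \<omega> * pseudo_outcome \<pi> t \<omega> - \<psi> \<omega> * pseudo_outcome \<pi>' t \<omega> \<partial>M)"
    using ipw_repr int_outcome by simp
  also have "\<dots> = (if t < T then (\<integral>\<omega>. \<psi> \<omega> * Qpi \<pi> (Suc t) \<omega> - \<psi> \<omega> * Qpi \<pi>' (Suc t) \<omega> \<partial>M) else 0)"
    using t by (auto simp: pseudo_outcome_def algebra_simps)
  also have "\<dots> = (if t < T then (\<integral>\<omega>. \<phi>' (H (Suc t) \<omega>) * Qpi \<pi> (Suc t) \<omega> \<partial>M) -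
      (\<integral>\<omega>. \<phi>' (H (Suc t) \<omega>) * Qpi \<pi>' (Suc t) \<omega> \<partial>M) else 0)"
  proof (cases "t < T")
    case True
    then have "Suc t \<in> {1..T}" using t by auto
    then have "integrable M (\<lambda>\<omega>. \<psi> \<omega> * Qpi \<sigma> (Suc t) \<omega>)" if "\<sigma> \<in> policy_class T Pcl" for \<sigma>
      by (intro integrable_bounded_mult[OF integrable_Qpi[OF that] _ \<psi>_bound]) measurable
    then show ?thesis using \<pi> \<pi>' by (simp add: \<psi>_eq)
  qed simp
  finally show ?thesis .
qed

end

section \<open>Optimality of backward induction\<close>

text \<open>\<open>\<pi>s\<close> is the policy of the correct-specification assumption, \<open>\<pi>B\<close> the backward-induction
  policy and \<open>\<pi>h\<close> the estimated policy \<open>hat \<pi>\<close>.\<close>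

locale dtr_backward = dtr_model M SM T d S Y A Pcl e Qf \<eta>
  for M :: "'w measure" and SM :: "'s measure" and T d S Y A Pcl e Qf \<eta> +
  fixes \<pi>s \<pi>B \<pi>h :: "nat \<Rightarrow> 's hist \<Rightarrow> nat"
  assumes spec_in_class: "\<forall>t\<in>{2..T}. \<pi>s t \<in> Pcl t"
    and spec_opt: "\<forall>t\<in>{2..T}. AE \<omega> in M. \<forall>\<pi>\<in>Pcl t.
          Qf \<pi>s t (obs_hist S A t \<omega>) (\<pi> (obs_hist S A t \<omega>))
          \<le> Qf \<pi>s t (obs_hist S A t \<omega>) (\<pi>s t (obs_hist S A t \<omega>))"
    and backward: "\<pi>B \<in> policy_class T Pcl"
    and backward_argmax: "\<And>t \<pi>. t \<in> {1..T} \<Longrightarrow> \<pi> \<in> Pcl t \<Longrightarrow>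
       (\<integral>\<omega>. Qf \<pi>B t (obs_hist S A t \<omega>) (\<pi> (obs_hist S A t \<omega>)) \<partial>M)
       \<le> (\<integral>\<omega>. Qf \<pi>B t (obs_hist S A t \<omega>) (\<pi>B t (obs_hist S A t \<omega>)) \<partial>M)"
    and estimate: "\<pi>h \<in> policy_class T Pcl"
begin

lemma spec_tail_in_class: "tail_in_class \<pi>s"
  using spec_in_class by blast

lemma backward_tail_in_class: "tail_in_class \<pi>B"
  by (rule policy_class_tail_in_class[OF backward])

lemma Q_spec_policy_le:
  "t \<in> {2..T} \<Longrightarrow> \<rho> \<in> Pcl t \<Longrightarrow> AE \<omega> in M. Qf \<pi>s t (H t \<omega>) (\<rho> (H t \<omega>)) \<le> Qpi \<pi>s t \<omega>"
  using spec_opt by (auto elim!: eventually_mono)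

lemma Q_action_le_spec:
  assumes \<pi>: "tail_in_class \<pi>" and t: "t \<in> {1..T}"
  shows "AE \<omega> in M. Qf \<pi> t (H t \<omega>) (A t \<omega>) \<le> Qf \<pi>s t (H t \<omega>) (A t \<omega>)"
proof -
  from t have "t \<le> T" by simp
  then show ?thesis using t
  proof (induction t rule: inc_induct)
    case base
    show ?case
      by (rule Q_action_mono[OF \<pi> spec_tail_in_class base]) (simp add: pseudo_outcome_last)
  next
    case (step n)
    have n: "n < T" "Suc n \<in> {1..T}" "Suc n \<in> {2..T}" using step by auto
    have \<rho>: "\<pi> (Suc n) \<in> Pcl (Suc n)" using \<pi> n by blast
    have "AE \<omega> in M. Qpi \<pi> (Suc n) \<omega> \<le> Qf \<pi>s (Suc n) (H (Suc n) \<omega>) (\<pi> (Suc n) (H (Suc n) \<omega>))"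
      by (rule Q_policy_le_of_action[OF \<pi> spec_tail_in_class n(2) \<rho> step.IH[OF n(2)]])
    moreover have "AE \<omega> in M. Qf \<pi>s (Suc n) (H (Suc n) \<omega>) (\<pi> (Suc n) (H (Suc n) \<omega>)) \<le> Qpi \<pi>s (Suc n) \<omega>"
      by (rule Q_spec_policy_le[OF n(3) \<rho>])
    ultimately show ?case
      by (intro Q_action_mono[OF \<pi> spec_tail_in_class step.prems])
         (auto simp: pseudo_outcome_less[OF n(1)] elim: eventually_elim2)
  qed
qed

lemma Qpi_backward_eq_spec_of_action:
  assumes t: "t \<in> {2..T}"
    and eq: "AE \<omega> in M. Qf \<pi>B t (H t \<omega>) (A t \<omega>) = Qf \<pi>s t (H t \<omega>) (A t \<omega>)"
  shows "AE \<omega> in M. Qpi \<pi>B t \<omega> = Qpi \<pi>s t \<omega>"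
proof -
  have t1: "t \<in> {1..T}" using t by auto
  have \<rho>s: "\<pi>s t \<in> Pcl t" using spec_tail_in_class t by blast
  have \<rho>B: "\<pi>B t \<in> Pcl t" by (rule policy_class_in[OF backward t1])
  let ?V = "\<lambda>\<omega>. Qf \<pi>B t (H t \<omega>) (\<pi>s t (H t \<omega>))"
  have V_eq: "AE \<omega> in M. ?V \<omega> = Qpi \<pi>s t \<omega>"
    by (rule Q_policy_eq_of_action[OF backward_tail_in_class spec_tail_in_class t1 \<rho>s eq])
  have "AE \<omega> in M. Qpi \<pi>B t \<omega> = Qf \<pi>s t (H t \<omega>) (\<pi>B t (H t \<omega>))"
    by (rule Q_policy_eq_of_action[OF backward_tail_in_class spec_tail_in_class t1 \<rho>B eq])
  then have le: "AE \<omega> in M. 0 \<le> ?V \<omega> - Qpi \<pi>B t \<omega>"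
    using V_eq Q_spec_policy_le[OF t \<rho>B] by eventually_elim simp
  have int: "integrable M ?V" "integrable M (Qpi \<pi>B t)"
    using integrable_Q_policy[OF backward_tail_in_class t1 \<rho>s]
      integrable_Q_policy[OF backward_tail_in_class t1 \<rho>B] by auto
  have "(\<integral>\<omega>. ?V \<omega> - Qpi \<pi>B t \<omega> \<partial>M) \<le> 0"
    using backward_argmax[OF t1 \<rho>s] int by simp
  then have "(\<integral>\<omega>. ?V \<omega> - Qpi \<pi>B t \<omega> \<partial>M) = 0"
    using integral_nonneg_AE[OF le] by simp
  then have "AE \<omega> in M. ?V \<omega> - Qpi \<pi>B t \<omega> = 0"
    using int le by (subst (asm) integral_nonneg_eq_0_iff_AE) auto
  then show ?thesis using V_eq by eventually_elim simp
qed

lemma Q_action_backward_eq_spec: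
  assumes t: "t \<in> {1..T}"
  shows "AE \<omega> in M. Qf \<pi>B t (H t \<omega>) (A t \<omega>) = Qf \<pi>s t (H t \<omega>) (A t \<omega>)"
proof -
  from t have "t \<le> T" by simp
  then show ?thesis using t
  proof (induction t rule: inc_induct)
    case base
    show ?case
      by (rule Q_action_cong[OF backward_tail_in_class spec_tail_in_class base])
         (simp add: pseudo_outcome_last)
  next
    case (step n)
    have n: "n < T" "Suc n \<in> {1..T}" "Suc n \<in> {2..T}" using step by auto
    have "AE \<omega> in M. Qpi \<pi>B (Suc n) \<omega> = Qpi \<pi>s (Suc n) \<omega>"
      by (rule Qpi_backward_eq_spec_of_action[OF n(3) step.IH[OF n(2)]])
    then show ?case
      by (intro Q_action_cong[OF backward_tail_in_class spec_tail_in_class step.prems])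
         (auto simp: pseudo_outcome_less[OF n(1)] elim: eventually_mono)
  qed
qed

lemma Qpi_backward_eq_spec: "t \<in> {2..T} \<Longrightarrow> AE \<omega> in M. Qpi \<pi>B t \<omega> = Qpi \<pi>s t \<omega>"
  by (rule Qpi_backward_eq_spec_of_action) (auto intro: Q_action_backward_eq_spec)

lemma Q_policy_le_backward:
  assumes t: "t \<in> {2..T}" and \<pi>: "tail_in_class \<pi>" and \<rho>: "\<rho> \<in> Pcl t"
  shows "AE \<omega> in M. Qf \<pi> t (H t \<omega>) (\<rho> (H t \<omega>)) \<le> Qpi \<pi>B t \<omega>"
proof -
  have t1: "t \<in> {1..T}" using t by auto
  have "AE \<omega> in M. Qf \<pi> t (H t \<omega>) (\<rho> (H t \<omega>)) \<le> Qf \<pi>s t (H t \<omega>) (\<rho> (H t \<omega>))"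
    by (rule Q_policy_le_of_action[OF \<pi> spec_tail_in_class t1 \<rho> Q_action_le_spec[OF \<pi> t1]])
  then show ?thesis
    using Q_spec_policy_le[OF t \<rho>] Qpi_backward_eq_spec[OF t] by eventually_elim simp
qed

lemma integral_Qpi_le_backward:
  assumes \<pi>: "\<pi> \<in> policy_class T Pcl"
  shows "(\<integral>\<omega>. Qpi \<pi> 1 \<omega> \<partial>M) \<le> (\<integral>\<omega>. Qpi \<pi>B 1 \<omega> \<partial>M)"
proof -
  have t1: "1 \<in> {1..T}" using T_pos by auto
  have \<rho>: "\<pi> 1 \<in> Pcl 1" by (rule policy_class_in[OF \<pi> t1])
  have tail: "tail_in_class \<pi>" by (rule policy_class_tail_in_class[OF \<pi>])
  have "AE \<omega> in M. Qpi \<pi> 1 \<omega> \<le> Qf \<pi>s 1 (H 1 \<omega>) (\<pi> 1 (H 1 \<omega>))"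
    by (rule Q_policy_le_of_action[OF tail spec_tail_in_class t1 \<rho> Q_action_le_spec[OF tail t1]])
  moreover have "AE \<omega> in M. Qf \<pi>B 1 (H 1 \<omega>) (\<pi> 1 (H 1 \<omega>)) = Qf \<pi>s 1 (H 1 \<omega>) (\<pi> 1 (H 1 \<omega>))"
    by (rule Q_policy_eq_of_action[OF backward_tail_in_class spec_tail_in_class t1 \<rho>
          Q_action_backward_eq_spec[OF t1]])
  ultimately have "(\<integral>\<omega>. Qpi \<pi> 1 \<omega> \<partial>M) \<le> (\<integral>\<omega>. Qf \<pi>B 1 (H 1 \<omega>) (\<pi> 1 (H 1 \<omega>)) \<partial>M)"
    by (intro integral_mono_AE integrable_Q_policy[OF tail t1 \<rho>]
        integrable_Q_policy[OF backward_tail_in_class t1 \<rho>]) (auto elim: eventually_elim2)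
  also have "\<dots> \<le> (\<integral>\<omega>. Qpi \<pi>B 1 \<omega> \<partial>M)" using backward_argmax[OF t1 \<rho>] by simp
  finally show ?thesis .
qed

lemma welfare_eq_integral_Qpi:
  "\<pi> \<in> policy_class T Pcl \<Longrightarrow> welfare M T d S Y \<pi> = (\<integral>\<omega>. Qpi \<pi> 1 \<omega> \<partial>M)"
  using welfare_eq_policy_value policy_value_eq_integral_Qpi[of \<pi> 1] T_pos by simp

lemma Sup_welfare_le_backward:
  "(SUP \<pi>\<in>policy_class T Pcl. welfare M T d S Y \<pi>) \<le> welfare M T d S Y \<pi>B"
proof (rule cSUP_least)
  show "policy_class T Pcl \<noteq> {}" using backward by auto
  fix \<pi> assume "\<pi> \<in> policy_class T Pcl"
  then show "welfare M T d S Y \<pi> \<le> welfare M T d S Y \<pi>B"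
    using integral_Qpi_le_backward welfare_eq_integral_Qpi backward by simp
qed

section \<open>The regret bound\<close>

abbreviation R :: "nat \<Rightarrow> real" where
  "R t \<equiv> stage_regret M T d S A Y t \<pi>h (\<pi>B t)"

definition regret_tail :: "nat \<Rightarrow> real" where
  "regret_tail t = (\<Sum>s\<in>{t..T}. (2 / \<eta>) ^ (s - t) * R s)"

lemma regret_tail_Suc:
  assumes "t \<le> T" shows "regret_tail t = R t + (2 / \<eta>) * regret_tail (Suc t)"
proof -
  have "regret_tail t = R t + (\<Sum>s\<in>{Suc t..T}. (2 / \<eta>) ^ (s - t) * R s)"
    unfolding regret_tail_def using assms by (subst sum.atLeast_Suc_atMost) auto
  also have "(\<Sum>s\<in>{Suc t..T}. (2 / \<eta>) ^ (s - t) * R s) = (2 / \<eta>) * regret_tail (Suc t)"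
    unfolding regret_tail_def sum_distrib_left
  proof (rule sum.cong[OF refl])
    fix s assume "s \<in> {Suc t..T}"
    then have "s - t = Suc (s - Suc t)" by auto
    then show "(2 / \<eta>) ^ (s - t) * R s = 2 / \<eta> * ((2 / \<eta>) ^ (s - Suc t) * R s)" by simp
  qed
  finally show ?thesis .
qed

lemma regret_tail_2:
  "regret_tail 2 / \<eta> = (\<Sum>t\<in>{2..T}. (2 ^ (t - 2) / \<eta> ^ (t - 1)) * R t)"
  unfolding regret_tail_def sum_divide_distrib
proof (rule sum.cong[OF refl])
  fix t :: nat assume "t \<in> {2..T}"
  then have "t - 1 = Suc (t - 2)" by auto
  then show "(2 / \<eta>) ^ (t - 2) * R t / \<eta> = 2 ^ (t - 2) / \<eta> ^ (t - 1) * R t"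
    by (simp add: power_divide)
qed

lemma stage_regret_eq_integral_Qpi:
  assumes t: "t \<in> {1..T}" and \<pi>: "\<pi> \<in> policy_class T Pcl" and agree: "\<forall>l\<in>{t..T}. \<pi> l = \<pi>h l"
  shows "R t = (\<integral>\<omega>. Qpi (\<pi>(t := \<pi>B t)) t \<omega> \<partial>M) - (\<integral>\<omega>. Qpi \<pi> t \<omega> \<partial>M)"
proof -
  have \<pi>t: "\<pi>(t := \<pi>B t) \<in> policy_class T Pcl"
    using \<pi> policy_class_in[OF backward t] by (auto simp: policy_class_def)
  have "policy_value M T d S A Y t (\<pi>h(t := \<pi>B t)) = policy_value M T d S A Y t (\<pi>(t := \<pi>B t))"
    and "policy_value M T d S A Y t \<pi>h = policy_value M T d S A Y t \<pi>"
    using agree by (auto intro!: policy_value_cong)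
  then show ?thesis
    unfolding stage_regret_def
    using policy_value_eq_integral_Qpi[OF \<pi>t t] policy_value_eq_integral_Qpi[OF \<pi> t] by simp
qed

text \<open>The bound \<open>G_t \<le> regret_tail t\<close> of the proof idea, for weights with values in
  \<open>[0, c]\<close>; it is proved by backward induction from stage \<open>T\<close> down to stage 2.\<close>

definition gap_bounded :: "nat \<Rightarrow> bool" where
  "gap_bounded t \<longleftrightarrow> (\<forall>\<pi> \<phi> c. \<pi> \<in> policy_class T Pcl \<longrightarrow> (\<forall>l\<in>{t..T}. \<pi> l = \<pi>h l) \<longrightarrow>
     \<phi> \<in> borel_measurable (hist_space SM t) \<longrightarrow> (\<forall>h. 0 \<le> \<phi> h \<and> \<phi> h \<le> c) \<longrightarrow>
     (\<integral>\<omega>. \<phi> (H t \<omega>) * Qpi \<pi>B t \<omega> \<partial>M) - (\<integral>\<omega>. \<phi> (H t \<omega>) * Qpi \<pi> t \<omega> \<partial>M) \<le> c * regret_tail t)"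

lemma gap_boundedD:
  "gap_bounded t \<Longrightarrow> \<pi> \<in> policy_class T Pcl \<Longrightarrow> \<forall>l\<in>{t..T}. \<pi> l = \<pi>h l \<Longrightarrow>
   \<phi> \<in> borel_measurable (hist_space SM t) \<Longrightarrow> \<forall>h. 0 \<le> \<phi> h \<and> \<phi> h \<le> c \<Longrightarrow>
   (\<integral>\<omega>. \<phi> (H t \<omega>) * Qpi \<pi>B t \<omega> \<partial>M) - (\<integral>\<omega>. \<phi> (H t \<omega>) * Qpi \<pi> t \<omega> \<partial>M) \<le> c * regret_tail t"
  unfolding gap_bounded_def by blast

lemma weighted_gap_le_next:
  fixes \<phi> :: "'s hist \<Rightarrow> real"
  assumes t: "t \<in> {1..T}" and \<pi>: "\<pi> \<in> policy_class T Pcl" and agree: "\<forall>l\<in>{Suc t..T}. \<pi> l = \<pi>h l"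
    and same: "\<pi> t = \<pi>B t"
    and \<phi>: "\<phi> \<in> borel_measurable (hist_space SM t)" and \<phi>_bound: "\<And>h. 0 \<le> \<phi> h \<and> \<phi> h \<le> c"
    and IH: "t < T \<Longrightarrow> gap_bounded (Suc t)"
  shows "(\<integral>\<omega>. \<phi> (H t \<omega>) * Qpi \<pi>B t \<omega> \<partial>M) - (\<integral>\<omega>. \<phi> (H t \<omega>) * Qpi \<pi> t \<omega> \<partial>M)
    \<le> c / \<eta> * regret_tail (Suc t)"
proof -
  have abs_bound: "\<bar>\<phi> h\<bar> \<le> c" for h using \<phi>_bound[of h] by auto
  note step = integral_weighted_Qpi_diff[OF backward \<pi> t same[symmetric] \<phi> abs_bound]
  show ?thesis
  proof (cases "t < T")
    case True
    have "ipw_lift t (\<pi>B t) \<phi> \<in> borel_measurable (hist_space SM (Suc t))"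
      by (rule ipw_lift_measurable[OF t policy_class_in[OF backward t] \<phi>])
    moreover have "\<forall>h. 0 \<le> ipw_lift t (\<pi>B t) \<phi> h \<and> ipw_lift t (\<pi>B t) \<phi> h \<le> c / \<eta>"
      using ipw_lift_bounds[where \<phi>=\<phi> and c=c, OF \<phi>_bound] by blast
    ultimately have "(\<integral>\<omega>. ipw_lift t (\<pi>B t) \<phi> (H (Suc t) \<omega>) * Qpi \<pi>B (Suc t) \<omega> \<partial>M)
        - (\<integral>\<omega>. ipw_lift t (\<pi>B t) \<phi> (H (Suc t) \<omega>) * Qpi \<pi> (Suc t) \<omega> \<partial>M) \<le> c / \<eta> * regret_tail (Suc t)"
      by (rule gap_boundedD[OF IH[OF True] \<pi> agree])
    then show ?thesis using step True by simp
  next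
    case False
    then show ?thesis using t step by (simp add: regret_tail_def)
  qed
qed

text \<open>Uses that from stage 2 on, every admissible policy is dominated by \<open>\<pi>B\<close>.\<close>

lemma weighted_gap_le_gap:
  assumes t: "t \<in> {2..T}" and \<pi>: "\<pi> \<in> policy_class T Pcl" and \<pi>': "\<pi>' \<in> policy_class T Pcl"
    and \<phi>: "\<phi> \<in> borel_measurable (hist_space SM t)" and \<phi>_bound: "\<And>h. 0 \<le> \<phi> h \<and> \<phi> h \<le> c"
  shows "(\<integral>\<omega>. \<phi> (H t \<omega>) * Qpi \<pi>' t \<omega> \<partial>M) - (\<integral>\<omega>. \<phi> (H t \<omega>) * Qpi \<pi> t \<omega> \<partial>M)
    \<le> c * ((\<integral>\<omega>. Qpi \<pi>B t \<omega> \<partial>M) - (\<integral>\<omega>. Qpi \<pi> t \<omega> \<partial>M))"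
proof -
  have t1: "t \<in> {1..T}" using t by auto
  have abs_bound: "\<bar>\<phi> h\<bar> \<le> c" for h using \<phi>_bound[of h] by auto
  note int_\<phi> = integrable_weighted_Qpi[OF _ t1 \<phi> abs_bound]
  have dominated: "AE \<omega> in M. Qpi \<sigma> t \<omega> \<le> Qpi \<pi>B t \<omega>" if "\<sigma> \<in> policy_class T Pcl" for \<sigma>
    by (rule Q_policy_le_backward[OF t policy_class_tail_in_class[OF that] policy_class_in[OF that t1]])
  have "(\<integral>\<omega>. \<phi> (H t \<omega>) * Qpi \<pi>' t \<omega> - \<phi> (H t \<omega>) * Qpi \<pi> t \<omega> \<partial>M)
      \<le> (\<integral>\<omega>. c * Qpi \<pi>B t \<omega> - c * Qpi \<pi> t \<omega> \<partial>M)"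
  proof (rule integral_mono_AE)
    show "integrable M (\<lambda>\<omega>. c * Qpi \<pi>B t \<omega> - c * Qpi \<pi> t \<omega>)"
      using integrable_Qpi[OF \<pi> t1] integrable_Qpi[OF backward t1] by auto
    from dominated[OF \<pi>] dominated[OF \<pi>']
    show "AE \<omega> in M. \<phi> (H t \<omega>) * Qpi \<pi>' t \<omega> - \<phi> (H t \<omega>) * Qpi \<pi> t \<omega> \<le> c * Qpi \<pi>B t \<omega> - c * Qpi \<pi> t \<omega>"
    proof eventually_elim
      case (elim \<omega>)
      have "\<phi> (H t \<omega>) * (Qpi \<pi>' t \<omega> - Qpi \<pi> t \<omega>) \<le> \<phi> (H t \<omega>) * (Qpi \<pi>B t \<omega> - Qpi \<pi> t \<omega>)"
        using elim \<phi>_bound[of "H t \<omega>"] by (intro mult_left_mono) auto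
      also have "\<dots> \<le> c * (Qpi \<pi>B t \<omega> - Qpi \<pi> t \<omega>)"
        using elim \<phi>_bound[of "H t \<omega>"] by (intro mult_right_mono) auto
      finally show ?case by (simp add: right_diff_distrib)
    qed
  qed (use int_\<phi>[OF \<pi>] int_\<phi>[OF \<pi>'] in simp)
  then show ?thesis
    using int_\<phi>[OF \<pi>] int_\<phi>[OF \<pi>'] integrable_Qpi[OF \<pi> t1] integrable_Qpi[OF backward t1]
    by (simp add: right_diff_distrib)
qed

lemma gap_bounded_step:
  assumes t: "t \<in> {2..T}" and IH: "t < T \<Longrightarrow> gap_bounded (Suc t)"
  shows "gap_bounded t"
  unfolding gap_bounded_def
proof (intro allI impI)
  fix \<pi> and \<phi> :: "'s hist \<Rightarrow> real" and c :: real
  assume \<pi>: "\<pi> \<in> policy_class T Pcl" and agree: "\<forall>l\<in>{t..T}. \<pi> l = \<pi>h l"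
    and \<phi>: "\<phi> \<in> borel_measurable (hist_space SM t)" and \<phi>_bound: "\<forall>h. 0 \<le> \<phi> h \<and> \<phi> h \<le> c"
  have t1: "t \<in> {1..T}" using t by auto
  have c: "0 \<le> c" using \<phi>_bound by (meson order.trans)
  define \<pi>' where "\<pi>' = \<pi>(t := \<pi>B t)"
  have \<pi>': "\<pi>' \<in> policy_class T Pcl"
    using \<pi> policy_class_in[OF backward t1] by (auto simp: policy_class_def \<pi>'_def)
  have agree': "\<forall>l\<in>{Suc t..T}. \<pi>' l = \<pi>h l" using agree by (auto simp: \<pi>'_def)
  let ?V = "\<lambda>\<sigma>. \<integral>\<omega>. Qpi \<sigma> t \<omega> \<partial>M" and ?W = "\<lambda>\<sigma>. \<integral>\<omega>. \<phi> (H t \<omega>) * Qpi \<sigma> t \<omega> \<partial>M"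
  have switch: "?W \<pi>B - ?W \<pi>' \<le> c / \<eta> * regret_tail (Suc t)"
    by (rule weighted_gap_le_next[OF t1 \<pi>' agree' _ \<phi>]) (use \<phi>_bound IH in \<open>auto simp: \<pi>'_def\<close>)
  have "(\<integral>\<omega>. 1 * Qpi \<pi>B t \<omega> \<partial>M) - (\<integral>\<omega>. 1 * Qpi \<pi>' t \<omega> \<partial>M) \<le> 1 / \<eta> * regret_tail (Suc t)"
    by (rule weighted_gap_le_next[where \<phi>="\<lambda>_. 1" and c=1, OF t1 \<pi>' agree' _ _ _ IH])
       (auto simp: \<pi>'_def)
  then have "?V \<pi>B - ?V \<pi>' \<le> 1 / \<eta> * regret_tail (Suc t)" by simp
  then have switch_1: "c * (?V \<pi>B - ?V \<pi>') \<le> c * (1 / \<eta> * regret_tail (Suc t))"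
    using c by (rule mult_left_mono)
  have dominated: "?W \<pi>' - ?W \<pi> \<le> c * (?V \<pi>B - ?V \<pi>)"
    by (rule weighted_gap_le_gap[OF t \<pi> \<pi>' \<phi>]) (use \<phi>_bound in auto)
  have "R t = ?V \<pi>' - ?V \<pi>"
    using stage_regret_eq_integral_Qpi[OF t1 \<pi> agree] by (simp add: \<pi>'_def)
  then have "c * R t = c * ?V \<pi>' - c * ?V \<pi>" by (simp add: right_diff_distrib)
  then have "?W \<pi>B - ?W \<pi> \<le> c / \<eta> * regret_tail (Suc t) + c * (1 / \<eta> * regret_tail (Suc t)) + c * R t"
    using switch switch_1 dominated unfolding right_diff_distrib by linarith
  also have "\<dots> = c * regret_tail t"
    using regret_tail_Suc[of t] t by (simp add: algebra_simps)
  finally show "?W \<pi>B - ?W \<pi> \<le> c * regret_tail t" .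
qed

lemma gap_bounded: "t \<in> {2..T} \<Longrightarrow> gap_bounded t"
proof -
  assume t: "t \<in> {2..T}"
  then have "t \<le> T" by simp
  then show ?thesis using t
    by (induction t rule: inc_induct) (auto intro: gap_bounded_step)
qed

lemma regret_le:
  "regret M T d S Y Pcl \<pi>h \<le> R 1 + (\<Sum>t\<in>{2..T}. (2 ^ (t - 2) / \<eta> ^ (t - 1)) * R t)"
proof -
  have t1: "1 \<in> {1..T}" using T_pos by auto
  define \<pi>1 where "\<pi>1 = \<pi>h(1 := \<pi>B 1)"
  have \<pi>1: "\<pi>1 \<in> policy_class T Pcl"
    using estimate policy_class_in[OF backward t1] by (auto simp: policy_class_def \<pi>1_def)
  have "(\<integral>\<omega>. 1 * Qpi \<pi>B 1 \<omega> \<partial>M) - (\<integral>\<omega>. 1 * Qpi \<pi>1 1 \<omega> \<partial>M) \<le> 1 / \<eta> * regret_tail (Suc 1)"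
    by (rule weighted_gap_le_next[where \<phi>="\<lambda>_. 1" and c=1, OF t1 \<pi>1])
       (auto simp: \<pi>1_def intro: gap_bounded)
  then have "(\<integral>\<omega>. Qpi \<pi>B 1 \<omega> \<partial>M) - (\<integral>\<omega>. Qpi \<pi>1 1 \<omega> \<partial>M) \<le> regret_tail 2 / \<eta>"
    by (simp add: numeral_2_eq_2)
  moreover have "R 1 = (\<integral>\<omega>. Qpi \<pi>1 1 \<omega> \<partial>M) - (\<integral>\<omega>. Qpi \<pi>h 1 \<omega> \<partial>M)"
    using stage_regret_eq_integral_Qpi[OF t1 estimate] by (simp add: \<pi>1_def)
  ultimately have "welfare M T d S Y \<pi>B - welfare M T d S Y \<pi>h \<le> R 1 + regret_tail 2 / \<eta>"
    using welfare_eq_integral_Qpi[OF backward] welfare_eq_integral_Qpi[OF estimate] by simp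
  then show ?thesis
    using Sup_welfare_le_backward regret_tail_2 unfolding regret_def by simp
qed

end

theorem lemma3:
  fixes M :: "'w measure" and SM :: "'s measure"
    and T :: nat and d :: "nat \<Rightarrow> nat"
    and S :: "nat \<Rightarrow> nat list \<Rightarrow> 'w \<Rightarrow> 's"
    and Y :: "nat \<Rightarrow> nat list \<Rightarrow> 'w \<Rightarrow> real"
    and A :: "nat \<Rightarrow> 'w \<Rightarrow> nat"
    and Pcl :: "nat \<Rightarrow> ('s hist \<Rightarrow> nat) set"
    and e :: "nat \<Rightarrow> 's hist \<Rightarrow> nat \<Rightarrow> real"
    and Qf :: "(nat \<Rightarrow> 's hist \<Rightarrow> nat) \<Rightarrow> nat \<Rightarrow> 's hist \<Rightarrow> nat \<Rightarrow> real"
    and \<eta> :: real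
    and \<pi>B \<pi>h :: "nat \<Rightarrow> 's hist \<Rightarrow> nat"
  assumes prob: "prob_space M"
    and T_pos: "1 \<le> T"
    and A_meas: "\<And>t. t \<in> {1..T} \<Longrightarrow> A t \<in> measurable M (count_space UNIV)"
    and A_range: "\<And>t \<omega>. t \<in> {1..T} \<Longrightarrow> \<omega> \<in> space M \<Longrightarrow> A t \<omega> < d t"
    and S_meas: "\<And>t a. t \<in> {1..T} \<Longrightarrow> a \<in> act_seqs d (t - 1) \<Longrightarrow> S t a \<in> measurable M SM"
    and Y_int: "\<And>t a. t \<in> {1..T} \<Longrightarrow> a \<in> act_seqs d t \<Longrightarrow> integrable M (Y t a)"
    and Pi_meas: "\<And>t. t \<in> {1..T} \<Longrightarrow> Pcl t \<subseteq> measurable (hist_space SM t) (count_space UNIV)"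
    and Pi_range: "\<And>t \<pi> h. t \<in> {1..T} \<Longrightarrow> \<pi> \<in> Pcl t \<Longrightarrow> \<pi> h < d t"
    and propensity: "\<And>t. t \<in> {1..T} \<Longrightarrow> is_propensity M SM S A t (e t)"
    and Q: "is_Q_family M T SM S A Y Pcl Qf"
    and ignorability: "seq_ignorability M T d SM S A Y"
    and eta: "0 < \<eta>" "\<eta> < 1"
    and overlap: "\<And>t. t \<in> {1..T} \<Longrightarrow>
       AE \<omega> in M. \<forall>a. (\<exists>\<pi>\<in>Pcl t. \<pi> (obs_hist S A t \<omega>) = a) \<longrightarrow> \<eta> \<le> e t (obs_hist S A t \<omega>) a"
    and correct_spec: "\<exists>\<pi>s. (\<forall>t\<in>{2..T}. \<pi>s t \<in> Pcl t) \<and>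
       (\<forall>t\<in>{2..T}. AE \<omega> in M. \<forall>\<pi>\<in>Pcl t.
          Qf \<pi>s t (obs_hist S A t \<omega>) (\<pi> (obs_hist S A t \<omega>))
          \<le> Qf \<pi>s t (obs_hist S A t \<omega>) (\<pi>s t (obs_hist S A t \<omega>)))"
    and backward: "\<pi>B \<in> policy_class T Pcl"
    and backward_argmax: "\<And>t \<pi>. t \<in> {1..T} \<Longrightarrow> \<pi> \<in> Pcl t \<Longrightarrow>
       (\<integral>\<omega>. Qf \<pi>B t (obs_hist S A t \<omega>) (\<pi> (obs_hist S A t \<omega>)) \<partial>M)
       \<le> (\<integral>\<omega>. Qf \<pi>B t (obs_hist S A t \<omega>) (\<pi>B t (obs_hist S A t \<omega>)) \<partial>M)"
    and est: "\<pi>h \<in> policy_class T Pcl"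
  shows "regret M T d S Y Pcl \<pi>h
     \<le> stage_regret M T d S A Y 1 \<pi>h (\<pi>B 1)
       + (\<Sum>t\<in>{2..T}. (2 ^ (t - 2) / \<eta> ^ (t - 1)) * stage_regret M T d S A Y t \<pi>h (\<pi>B t))"
proof -
  obtain \<pi>s where spec_class: "\<forall>t\<in>{2..T}. \<pi>s t \<in> Pcl t"
    and spec_opt: "\<forall>t\<in>{2..T}. AE \<omega> in M. \<forall>\<pi>\<in>Pcl t.
          Qf \<pi>s t (obs_hist S A t \<omega>) (\<pi> (obs_hist S A t \<omega>))
          \<le> Qf \<pi>s t (obs_hist S A t \<omega>) (\<pi>s t (obs_hist S A t \<omega>))"
    using correct_spec by blast
  interpret dtr_backward M SM T d S Y A Pcl e Qf \<eta> \<pi>s \<pi>B \<pi>h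
    by (intro dtr_backward.intro dtr_model.intro dtr_backward_axioms.intro) (fact assms spec_class spec_opt)+
  show ?thesis by (rule regret_le)
qed

end
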